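(* Let $\Phi:\mathbb{R}^2\to\mathbb{R}^2$ be a jacobian map of the form $\Phi(x,y)=(ax+by+p(x,y),\,cx+dy+q(x,y))$ with $a,b,c,d\in\mathbb{R}$, $p,q$ real polynomials, $o(p)>1$, $o(q)>1$. Suppose one of the following holds: (i) $\max\{d(p),d(q)\}<o(p)+o(q)-1$; (ii) both $p$ and $q$ are even polynomials; (iii) $p$ is odd, $q$ is even, and $(p,q)$ satisfies the gap condition; (iv) $(p,q)$ satisfies the symmetric gap condition. Then $\Psi=\Phi\circ(J_\Phi(0,0))^{-1}$ is a shear map.
   Context: A jacobian map is a real polynomial map $\Phi:\mathbb{R}^2\to\mathbb{R}^2$ whose jacobian determinant $\det J_\Phi$ is a non-zero constant; $J_\Phi(0,0)$ denotes its jacobian matrix at the origin, viewed as a linear map. For a polynomial $P$, $d(P)$ is its degree and $o(P)$ its order (lowest degree of a monomial appearing in $P$). A polynomial is even if it is a sum of monomials of even degree, odd if it is a sum of monomials of odd degree. A non-negative integer is a gap of $P$ if it is the difference of the degrees of two distinct monomials of $P$; $G(P)$ denotes the set of gaps of $P$ (empty if $P$ has at most one monomial). The pair $(P,Q)$ satisfies the gap condition if for every monomial $M$ of $P$ one has $d(M)-1\notin G(Q)$; it satisfies the symmetric gap condition if both $(P,Q)$ and $(Q,P)$ satisfy the gap condition. A polynomial map is a shear map if its nonlinear terms are linear combinations of powers of a single homogeneous polynomial of degree 1, i.e. there is a linear form $\ell(x,y)$ such that each component of the map, after removing its terms of degree $\le 1$, is a real linear combination of $\ell^i$, $i\ge 2$.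 *)

theory Defs
  imports Complex_Main "HOL-Library.Extended_Nat"
begin

text \<open>Real polynomials in two variables x, y, represented by their coefficient
  function: P (i,j) is the coefficient of the monomial x^i y^j.  A genuine
  polynomial has finitely many nonzero coefficients (assumption poly2).\<close>

type_synonym poly2 = "nat \<times> nat \<Rightarrow> real"

definition supp2 :: "poly2 \<Rightarrow> (nat \<times> nat) set" where
  "supp2 P = {m. P m \<noteq> 0}"

definition poly2 :: "poly2 \<Rightarrow> bool" where
  "poly2 P \<longleftrightarrow> finite (supp2 P)"

definition mdeg :: "nat \<times> nat \<Rightarrow> nat" where
  "mdeg m = fst m + snd m"

definition eval2 :: "poly2 \<Rightarrow> real \<Rightarrow> real \<Rightarrow> real" where
  "eval2 P x y = (\<Sum>m\<in>supp2 P. P m * x ^ fst m * y ^ snd m)"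

definition dx2 :: "poly2 \<Rightarrow> poly2" where
  "dx2 P = (\<lambda>(i,j). real (Suc i) * P (Suc i, j))"

definition dy2 :: "poly2 \<Rightarrow> poly2" where
  "dy2 P = (\<lambda>(i,j). real (Suc j) * P (i, Suc j))"

text \<open>Degree (0 for the zero polynomial) and order (infinity for the zero polynomial).\<close>
definition deg2 :: "poly2 \<Rightarrow> nat" where
  "deg2 P = (if supp2 P = {} then 0 else Max (mdeg ` supp2 P))"

definition ord2 :: "poly2 \<Rightarrow> enat" where
  "ord2 P = (if supp2 P = {} then \<infinity> else enat (Min (mdeg ` supp2 P)))"

definition even2 :: "poly2 \<Rightarrow> bool" where
  "even2 P \<longleftrightarrow> (\<forall>m\<in>supp2 P. even (mdeg m))"

definition odd2 :: "poly2 \<Rightarrow> bool" where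
  "odd2 P \<longleftrightarrow> (\<forall>m\<in>supp2 P. odd (mdeg m))"

definition gaps :: "poly2 \<Rightarrow> int set" where
  "gaps P = {\<bar>int (mdeg m1) - int (mdeg m2)\<bar> | m1 m2. m1 \<in> supp2 P \<and> m2 \<in> supp2 P \<and> m1 \<noteq> m2}"

definition gap_condition :: "poly2 \<Rightarrow> poly2 \<Rightarrow> bool" where
  "gap_condition P Q \<longleftrightarrow> (\<forall>m\<in>supp2 P. int (mdeg m) - 1 \<notin> gaps Q)"

definition sym_gap_condition :: "poly2 \<Rightarrow> poly2 \<Rightarrow> bool" where
  "sym_gap_condition P Q \<longleftrightarrow> gap_condition P Q \<and> gap_condition Q P"

definition Phi :: "real \<Rightarrow> real \<Rightarrow> real \<Rightarrow> real \<Rightarrow> poly2 \<Rightarrow> poly2 \<Rightarrow> real \<times> real \<Rightarrow> real \<times> real" where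
  "Phi a b c d p q = (\<lambda>(x,y). (a*x + b*y + eval2 p x y, c*x + d*y + eval2 q x y))"

definition jac_det :: "real \<Rightarrow> real \<Rightarrow> real \<Rightarrow> real \<Rightarrow> poly2 \<Rightarrow> poly2 \<Rightarrow> real \<Rightarrow> real \<Rightarrow> real" where
  "jac_det a b c d p q x y =
     (a + eval2 (dx2 p) x y) * (d + eval2 (dy2 q) x y)
   - (b + eval2 (dy2 p) x y) * (c + eval2 (dx2 q) x y)"

definition jacobian_map :: "real \<Rightarrow> real \<Rightarrow> real \<Rightarrow> real \<Rightarrow> poly2 \<Rightarrow> poly2 \<Rightarrow> bool" where
  "jacobian_map a b c d p q \<longleftrightarrow> (\<exists>k. k \<noteq> 0 \<and> (\<forall>x y. jac_det a b c d p q x y = k))"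

definition jac0 :: "real \<Rightarrow> real \<Rightarrow> real \<Rightarrow> real \<Rightarrow> poly2 \<Rightarrow> poly2 \<Rightarrow> real \<times> real \<Rightarrow> real \<times> real" where
  "jac0 a b c d p q = (\<lambda>(x,y).
     ((a + eval2 (dx2 p) 0 0) * x + (b + eval2 (dy2 p) 0 0) * y,
      (c + eval2 (dx2 q) 0 0) * x + (d + eval2 (dy2 q) 0 0) * y))"

definition shear_map :: "(real \<times> real \<Rightarrow> real \<times> real) \<Rightarrow> bool" where
  "shear_map F \<longleftrightarrow> (\<exists>\<alpha> \<beta>. (\<alpha>, \<beta>) \<noteq> (0, 0) \<and>
     (\<exists>e1 f1 g1 e2 f2 g2 (c1::nat \<Rightarrow> real) (c2::nat \<Rightarrow> real) (N::nat).
       \<forall>u v. F (u, v) =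
         (e1 + f1*u + g1*v + (\<Sum>i=2..N. c1 i * (\<alpha>*u + \<beta>*v) ^ i),
          e2 + f2*u + g2*v + (\<Sum>i=2..N. c2 i * (\<alpha>*u + \<beta>*v) ^ i))))"

end

theory Submission
  imports Defs
begin

text \<open>The constant jacobian determinant splits, coefficient by coefficient, into the part
  \<open>d p_x - c p_y - b q_x + a q_y\<close> that is linear in \<open>(p, q)\<close> and the jacobian \<open>J(p, q)\<close>; each of the
  hypotheses (i)--(iv) keeps the degrees of their monomials apart, so both vanish.  Vanishing of the
  linear part says that the form \<open>(c p - a q) dx + (d p - b q) dy\<close> is closed; its polynomial potential
  \<open>K\<close> then has vanishing Hessian determinant because \<open>J(p, q) = 0\<close>.  A Newton polygon argument shows
  that such a \<open>K\<close> is a polynomial in one linear form \<open>\<ell>\<close> plus a linear function.  Hence \<open>p\<close> and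
  \<open>q\<close> are affine functions of one polynomial in \<open>\<ell>\<close>, and composing \<open>\<Phi>\<close> with the inverse of its
  linear part leaves a shear.\<close>

section \<open>Evaluation, linear combinations and partial derivatives\<close>

lemma eval2_eq_sum_superset:
  assumes "finite F" "supp2 P \<subseteq> F"
  shows "eval2 P x y = (\<Sum>m\<in>F. P m * x ^ fst m * y ^ snd m)"
  unfolding eval2_def
  by (rule sum.mono_neutral_left) (use assms in \<open>auto simp: supp2_def\<close>)

lemma eval2_zero: "(\<And>m. P m = 0) \<Longrightarrow> eval2 P x y = 0"
  by (simp add: eval2_def supp2_def)

lemma poly2_obtain_box:
  assumes "poly2 P"
  obtains n where "supp2 P \<subseteq> {..n} \<times> {..n}"
proof
  have "finite (supp2 P)" using assms by (simp add: poly2_def)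
  then show "supp2 P \<subseteq> {..Max (fst ` supp2 P \<union> snd ` supp2 P)} \<times> {..Max (fst ` supp2 P \<union> snd ` supp2 P)}"
    by (force intro!: Max_ge)
qed

lemma poly2_coeff_eq_0_if_eval2_eq_0:
  assumes "poly2 P" and "\<And>x y. eval2 P x y = 0"
  shows "P m = 0"
proof -
  obtain n where n: "supp2 P \<subseteq> {..n} \<times> {..n}" using poly2_obtain_box[OF assms(1)] .
  have "eval2 P x y = (\<Sum>j\<le>n. (\<Sum>i\<le>n. P (i,j) * x ^ i) * y ^ j)" for x y
  proof -
    have "eval2 P x y = (\<Sum>m\<in>{..n} \<times> {..n}. P m * x ^ fst m * y ^ snd m)"
      using n by (intro eval2_eq_sum_superset) auto
    also have "\<dots> = (\<Sum>j\<le>n. \<Sum>i\<le>n. P (i,j) * x ^ i * y ^ j)"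
      by (subst sum.swap) (simp add: sum.cartesian_product split_def)
    finally show ?thesis by (simp add: sum_distrib_right)
  qed
  then have "(\<Sum>i\<le>n. P (i,j) * x ^ i) = 0" if "j \<le> n" for x j
    using assms(2) that polyfun_eq_0[of "\<lambda>j. \<Sum>i\<le>n. P (i,j) * x ^ i" n] by auto
  then have "P (i,j) = 0" if "i \<le> n" "j \<le> n" for i j
    using that polyfun_eq_0[of "\<lambda>i. P (i,j)" n] by (metis (no_types, lifting) mult.commute)
  then show ?thesis using n by (cases m) (auto simp: supp2_def)
qed

definition lin2 :: "real \<Rightarrow> poly2 \<Rightarrow> real \<Rightarrow> poly2 \<Rightarrow> poly2" where
  "lin2 \<alpha> P \<beta> Q = (\<lambda>m. \<alpha> * P m + \<beta> * Q m)"

lemma poly2_lin2: "poly2 P \<Longrightarrow> poly2 Q \<Longrightarrow> poly2 (lin2 \<alpha> P \<beta> Q)"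
  unfolding poly2_def lin2_def
  by (rule finite_subset[of _ "supp2 P \<union> supp2 Q"]) (auto simp: supp2_def)

lemma eval2_lin2:
  assumes "poly2 P" "poly2 Q"
  shows "eval2 (lin2 \<alpha> P \<beta> Q) x y = \<alpha> * eval2 P x y + \<beta> * eval2 Q x y"
proof -
  have fin: "finite (supp2 P \<union> supp2 Q)" using assms by (simp add: poly2_def)
  have "eval2 (lin2 \<alpha> P \<beta> Q) x y = (\<Sum>m\<in>supp2 P \<union> supp2 Q. (\<alpha> * P m + \<beta> * Q m) * x ^ fst m * y ^ snd m)"
    unfolding lin2_def by (rule eval2_eq_sum_superset[OF fin]) (auto simp: supp2_def)
  also have "\<dots> = \<alpha> * (\<Sum>m\<in>supp2 P \<union> supp2 Q. P m * x ^ fst m * y ^ snd m)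
                 + \<beta> * (\<Sum>m\<in>supp2 P \<union> supp2 Q. Q m * x ^ fst m * y ^ snd m)"
    by (simp add: sum.distrib sum_distrib_left algebra_simps)
  finally show ?thesis
    using eval2_eq_sum_superset[OF fin, of P] eval2_eq_sum_superset[OF fin, of Q] by auto
qed

lemma dx2_lin2: "dx2 (lin2 \<alpha> P \<beta> Q) = lin2 \<alpha> (dx2 P) \<beta> (dx2 Q)"
  by (auto simp: dx2_def lin2_def fun_eq_iff algebra_simps)

lemma dy2_lin2: "dy2 (lin2 \<alpha> P \<beta> Q) = lin2 \<alpha> (dy2 P) \<beta> (dy2 Q)"
  by (auto simp: dy2_def lin2_def fun_eq_iff algebra_simps)

lemma poly2_dx2: "poly2 P \<Longrightarrow> poly2 (dx2 P)"
  unfolding poly2_def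
  by (rule finite_subset[OF _ finite_imageI[of _ "\<lambda>(i,j). (i - 1, j)"]]) (force simp: supp2_def dx2_def)+

lemma poly2_dy2: "poly2 P \<Longrightarrow> poly2 (dy2 P)"
  unfolding poly2_def
  by (rule finite_subset[OF _ finite_imageI[of _ "\<lambda>(i,j). (i, j - 1)"]]) (force simp: supp2_def dy2_def)+

lemma dx2_dy2_commute: "dy2 (dx2 K) = dx2 (dy2 K)"
  by (auto simp: fun_eq_iff dx2_def dy2_def)

lemma eval2_shifted:
  assumes "poly2 P" and "\<And>i j. i < a \<or> j < b \<Longrightarrow> w (i,j) = 0"
  shows "eval2 (\<lambda>(i,j). w (i+a, j+b) * P (i+a, j+b)) x y
       = (\<Sum>m\<in>supp2 P. w m * P m * x ^ (fst m - a) * y ^ (snd m - b))"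
proof -
  define S where "S = {m\<in>supp2 P. a \<le> fst m \<and> b \<le> snd m}"
  define h where "h = (\<lambda>m::nat\<times>nat. (fst m - a, snd m - b))"
  define R where "R = (\<lambda>(i,j). w (i+a, j+b) * P (i+a, j+b))"
  have fin: "finite (supp2 P)" using assms by (simp add: poly2_def)
  have "supp2 R \<subseteq> h ` S"
  proof
    fix m assume "m \<in> supp2 R"
    then have "(fst m + a, snd m + b) \<in> S" by (cases m) (auto simp: supp2_def R_def S_def)
    then show "m \<in> h ` S" by (force simp: h_def)
  qed
  then have "eval2 R x y = (\<Sum>m\<in>h ` S. R m * x ^ fst m * y ^ snd m)"
    using fin by (intro eval2_eq_sum_superset) (auto simp: S_def)
  also have "\<dots> = (\<Sum>m\<in>S. w m * P m * x ^ (fst m - a) * y ^ (snd m - b))"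
    by (subst sum.reindex) (auto simp: inj_on_def h_def S_def R_def prod_eq_iff)
  also have "\<dots> = (\<Sum>m\<in>supp2 P. w m * P m * x ^ (fst m - a) * y ^ (snd m - b))"
    using fin assms(2) by (intro sum.mono_neutral_left) (force simp: S_def not_le)+
  finally show ?thesis by (simp add: R_def)
qed

lemma eval2_dx2:
  assumes "poly2 K"
  shows "eval2 (dx2 K) x y = (\<Sum>m\<in>supp2 K. real (fst m) * K m * x ^ (fst m - 1) * y ^ snd m)"
proof -
  have eq: "dx2 K = (\<lambda>(i,j). (\<lambda>(i,j). real i) (i+1, j+0) * K (i+1, j+0))"
    by (auto simp: dx2_def fun_eq_iff)
  show ?thesis unfolding eq by (subst eval2_shifted[OF assms]) (auto simp: split_def)
qed

lemma eval2_dy2: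
  assumes "poly2 K"
  shows "eval2 (dy2 K) x y = (\<Sum>m\<in>supp2 K. real (snd m) * K m * x ^ fst m * y ^ (snd m - 1))"
proof -
  have eq: "dy2 K = (\<lambda>(i,j). (\<lambda>(i,j). real j) (i+0, j+1) * K (i+0, j+1))"
    by (auto simp: dy2_def fun_eq_iff)
  show ?thesis unfolding eq by (subst eval2_shifted[OF assms]) (auto simp: split_def)
qed

lemma eval2_dx2_dx2:
  assumes "poly2 K"
  shows "eval2 (dx2 (dx2 K)) x y
     = (\<Sum>m\<in>supp2 K. real (fst m) * (real (fst m) - 1) * K m * x ^ (fst m - 2) * y ^ snd m)"
proof -
  have eq: "dx2 (dx2 K) = (\<lambda>(i,j). (\<lambda>(i,j). real i * (real i - 1)) (i+2, j+0) * K (i+2, j+0))"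
    by (auto simp: dx2_def fun_eq_iff algebra_simps numeral_2_eq_2)
  show ?thesis unfolding eq by (subst eval2_shifted[OF assms]) (auto simp: split_def less_2_cases_iff)
qed

lemma eval2_dy2_dy2:
  assumes "poly2 K"
  shows "eval2 (dy2 (dy2 K)) x y
     = (\<Sum>m\<in>supp2 K. real (snd m) * (real (snd m) - 1) * K m * x ^ fst m * y ^ (snd m - 2))"
proof -
  have eq: "dy2 (dy2 K) = (\<lambda>(i,j). (\<lambda>(i,j). real j * (real j - 1)) (i+0, j+2) * K (i+0, j+2))"
    by (auto simp: dy2_def fun_eq_iff algebra_simps numeral_2_eq_2)
  show ?thesis unfolding eq by (subst eval2_shifted[OF assms]) (auto simp: split_def less_2_cases_iff)
qed

lemma eval2_dx2_dy2:
  assumes "poly2 K"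
  shows "eval2 (dx2 (dy2 K)) x y
     = (\<Sum>m\<in>supp2 K. real (fst m) * real (snd m) * K m * x ^ (fst m - 1) * y ^ (snd m - 1))"
proof -
  have eq: "dx2 (dy2 K) = (\<lambda>(i,j). (\<lambda>(i,j). real i * real j) (i+1, j+1) * K (i+1, j+1))"
    by (auto simp: dy2_def dx2_def fun_eq_iff)
  show ?thesis unfolding eq by (subst eval2_shifted[OF assms]) (auto simp: split_def)
qed

lemma has_real_derivative_eval2_x:
  "poly2 P \<Longrightarrow> ((\<lambda>x. eval2 P x y) has_real_derivative eval2 (dx2 P) x y) (at x)"
  unfolding eval2_dx2 eval2_def[of P]
  by (rule DERIV_sum) (auto intro!: derivative_eq_intros)

lemma has_real_derivative_eval2_y:
  "poly2 P \<Longrightarrow> ((\<lambda>y. eval2 P x y) has_real_derivative eval2 (dy2 P) x y) (at y)"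
  unfolding eval2_dy2 eval2_def[of P]
  by (rule DERIV_sum) (auto intro!: derivative_eq_intros)

section \<open>Hessian and jacobian determinants as polynomials\<close>

text \<open>The coefficient polynomial of
  \<open>\<Sum>m1\<in>supp P. \<Sum>m2\<in>supp Q. w m1 m2 * P m1 * Q m2 * X ^ e m1 m2\<close>; with suitable weights
  and exponent maps it represents products of partial derivatives.\<close>
definition wprod2 :: "(nat\<times>nat \<Rightarrow> nat\<times>nat \<Rightarrow> nat\<times>nat) \<Rightarrow> (nat\<times>nat \<Rightarrow> nat\<times>nat \<Rightarrow> real) \<Rightarrow>
    poly2 \<Rightarrow> poly2 \<Rightarrow> poly2" where
  "wprod2 e w P Q \<mu> = (\<Sum>z\<in>{z\<in>supp2 P \<times> supp2 Q. e (fst z) (snd z) = \<mu>}.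
                          w (fst z) (snd z) * P (fst z) * Q (snd z))"

lemma supp2_wprod2E:
  assumes "\<mu> \<in> supp2 (wprod2 e w P Q)"
  obtains m1 m2 where "m1 \<in> supp2 P" "m2 \<in> supp2 Q" "e m1 m2 = \<mu>" "w m1 m2 \<noteq> 0"
proof -
  have "wprod2 e w P Q \<mu> \<noteq> 0" using assms by (simp add: supp2_def)
  then obtain z where "z \<in> {z\<in>supp2 P \<times> supp2 Q. e (fst z) (snd z) = \<mu>}"
    and "w (fst z) (snd z) * P (fst z) * Q (snd z) \<noteq> 0"
    unfolding wprod2_def by (rule sum.not_neutral_contains_not_neutral)
  then show ?thesis using that[of "fst z" "snd z"] by auto
qed

lemma supp2_wprod2_subset:
  "supp2 (wprod2 e w P Q) \<subseteq> (\<lambda>z. e (fst z) (snd z)) ` (supp2 P \<times> supp2 Q)"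
  by (force elim: supp2_wprod2E)

lemma poly2_wprod2: "poly2 P \<Longrightarrow> poly2 Q \<Longrightarrow> poly2 (wprod2 e w P Q)"
  unfolding poly2_def by (rule finite_subset[OF supp2_wprod2_subset]) simp

lemma eval2_wprod2:
  assumes "poly2 P" "poly2 Q"
  shows "eval2 (wprod2 e w P Q) x y = (\<Sum>z\<in>supp2 P \<times> supp2 Q.
           w (fst z) (snd z) * P (fst z) * Q (snd z) * x ^ fst (e (fst z) (snd z)) * y ^ snd (e (fst z) (snd z)))"
proof -
  define S where "S = supp2 P \<times> supp2 Q"
  define g where "g = (\<lambda>z. e (fst z) (snd z))"
  have fin: "finite S" using assms by (simp add: poly2_def S_def)
  have "eval2 (wprod2 e w P Q) x y = (\<Sum>\<mu>\<in>g ` S. wprod2 e w P Q \<mu> * x ^ fst \<mu> * y ^ snd \<mu>)"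
    using fin supp2_wprod2_subset by (intro eval2_eq_sum_superset) (auto simp: S_def g_def)
  also have "\<dots> = (\<Sum>\<mu>\<in>g ` S. \<Sum>z\<in>{z\<in>S. g z = \<mu>}.
                     w (fst z) (snd z) * P (fst z) * Q (snd z) * x ^ fst (g z) * y ^ snd (g z))"
    unfolding wprod2_def S_def g_def by (auto simp: sum_distrib_right intro!: sum.cong)
  also have "\<dots> = (\<Sum>z\<in>S. w (fst z) (snd z) * P (fst z) * Q (snd z) * x ^ fst (g z) * y ^ snd (g z))"
    by (rule sum.image_gen[OF fin, symmetric])
  finally show ?thesis by (simp add: S_def g_def)
qed

definition hess_weight :: "nat\<times>nat \<Rightarrow> nat\<times>nat \<Rightarrow> real" where
  "hess_weight m1 m2 = real (fst m1) * (real (fst m1) - 1) * real (snd m2) * (real (snd m2) - 1)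
                     - real (fst m1) * real (snd m1) * real (fst m2) * real (snd m2)"

definition jac_weight :: "nat\<times>nat \<Rightarrow> nat\<times>nat \<Rightarrow> real" where
  "jac_weight m1 m2 = real (fst m1) * real (snd m2) - real (snd m1) * real (fst m2)"

definition hess2 :: "poly2 \<Rightarrow> poly2" where
  "hess2 K = wprod2 (\<lambda>m1 m2. (fst m1 + fst m2 - 2, snd m1 + snd m2 - 2)) hess_weight K K"

definition jac2 :: "poly2 \<Rightarrow> poly2 \<Rightarrow> poly2" where
  "jac2 P Q = wprod2 (\<lambda>m1 m2. (fst m1 + fst m2 - 1, snd m1 + snd m2 - 1)) jac_weight P Q"

lemma poly2_hess2: "poly2 K \<Longrightarrow> poly2 (hess2 K)"
  unfolding hess2_def by (rule poly2_wprod2)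

lemma poly2_jac2: "poly2 P \<Longrightarrow> poly2 Q \<Longrightarrow> poly2 (jac2 P Q)"
  unfolding jac2_def by (rule poly2_wprod2)

lemma hess_monomial_product:
  fixes x y k1 k2 :: real
  shows "real i1 * (real i1 - 1) * real j2 * (real j2 - 1) * k1 * k2 * x ^ (i1 + i2 - 2) * y ^ (j1 + j2 - 2)
       = (real i1 * (real i1 - 1) * k1 * x ^ (i1 - 2) * y ^ j1) * (real j2 * (real j2 - 1) * k2 * x ^ i2 * y ^ (j2 - 2))"
    and "real i1 * real j1 * real i2 * real j2 * k1 * k2 * x ^ (i1 + i2 - 2) * y ^ (j1 + j2 - 2)
       = (real i1 * real j1 * k1 * x ^ (i1 - 1) * y ^ (j1 - 1)) * (real i2 * real j2 * k2 * x ^ (i2 - 1) * y ^ (j2 - 1))"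
   apply (cases i1; cases "i1 - 1"; cases j2; cases "j2 - 1"; simp add: power_add)
  apply (cases i1; cases j1; cases i2; cases j2; simp add: power_add)
  done

lemma jac_monomial_product:
  fixes x y k1 k2 :: real
  shows "real i1 * real j2 * k1 * k2 * x ^ (i1 + i2 - 1) * y ^ (j1 + j2 - 1)
       = (real i1 * k1 * x ^ (i1 - 1) * y ^ j1) * (real j2 * k2 * x ^ i2 * y ^ (j2 - 1))"
    and "real j1 * real i2 * k1 * k2 * x ^ (i1 + i2 - 1) * y ^ (j1 + j2 - 1)
       = (real j1 * k1 * x ^ i1 * y ^ (j1 - 1)) * (real i2 * k2 * x ^ (i2 - 1) * y ^ j2)"
   apply (cases i1; cases j2; simp add: power_add)
  apply (cases j1; cases i2; simp add: power_add)
  done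

lemma eval2_hess2:
  assumes "poly2 K"
  shows "eval2 (hess2 K) x y = eval2 (dx2 (dx2 K)) x y * eval2 (dy2 (dy2 K)) x y
                              - eval2 (dx2 (dy2 K)) x y ^ 2"
proof -
  have "eval2 (dx2 (dx2 K)) x y * eval2 (dy2 (dy2 K)) x y - eval2 (dx2 (dy2 K)) x y ^ 2
    = (\<Sum>z\<in>supp2 K \<times> supp2 K.
        (real (fst (fst z)) * (real (fst (fst z)) - 1) * K (fst z) * x ^ (fst (fst z) - 2) * y ^ snd (fst z))
      * (real (snd (snd z)) * (real (snd (snd z)) - 1) * K (snd z) * x ^ fst (snd z) * y ^ (snd (snd z) - 2))
      - (real (fst (fst z)) * real (snd (fst z)) * K (fst z) * x ^ (fst (fst z) - 1) * y ^ (snd (fst z) - 1))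
      * (real (fst (snd z)) * real (snd (snd z)) * K (snd z) * x ^ (fst (snd z) - 1) * y ^ (snd (snd z) - 1)))"
    unfolding eval2_dx2_dx2[OF assms] eval2_dy2_dy2[OF assms] eval2_dx2_dy2[OF assms] power2_eq_square
    by (simp add: sum_product sum.cartesian_product sum_subtractf split_def)
  also have "\<dots> = eval2 (hess2 K) x y"
    unfolding hess2_def eval2_wprod2[OF assms assms]
    by (rule sum.cong[OF refl]) (simp only: hess_weight_def fst_conv snd_conv left_diff_distrib hess_monomial_product)
  finally show ?thesis by simp
qed

lemma eval2_jac2:
  assumes "poly2 P" "poly2 Q"
  shows "eval2 (jac2 P Q) x y
       = eval2 (dx2 P) x y * eval2 (dy2 Q) x y - eval2 (dy2 P) x y * eval2 (dx2 Q) x y"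
proof -
  have "eval2 (dx2 P) x y * eval2 (dy2 Q) x y - eval2 (dy2 P) x y * eval2 (dx2 Q) x y
    = (\<Sum>z\<in>supp2 P \<times> supp2 Q.
        (real (fst (fst z)) * P (fst z) * x ^ (fst (fst z) - 1) * y ^ snd (fst z))
      * (real (snd (snd z)) * Q (snd z) * x ^ fst (snd z) * y ^ (snd (snd z) - 1))
      - (real (snd (fst z)) * P (fst z) * x ^ fst (fst z) * y ^ (snd (fst z) - 1))
      * (real (fst (snd z)) * Q (snd z) * x ^ (fst (snd z) - 1) * y ^ snd (snd z)))"
    unfolding eval2_dx2[OF assms(1)] eval2_dy2[OF assms(2)] eval2_dx2[OF assms(2)] eval2_dy2[OF assms(1)]
    by (simp add: sum_product sum.cartesian_product sum_subtractf split_def)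
  also have "\<dots> = eval2 (jac2 P Q) x y"
    unfolding jac2_def eval2_wprod2[OF assms]
    by (rule sum.cong[OF refl]) (simp only: jac_weight_def fst_conv snd_conv left_diff_distrib jac_monomial_product)
  finally show ?thesis by simp
qed

section \<open>Splitting the jacobian condition by degrees\<close>

definition jac_lin2 :: "real \<Rightarrow> real \<Rightarrow> real \<Rightarrow> real \<Rightarrow> poly2 \<Rightarrow> poly2 \<Rightarrow> poly2" where
  "jac_lin2 a b c d p q = lin2 1 (lin2 d (dx2 p) (-c) (dy2 p)) 1 (lin2 (-b) (dx2 q) a (dy2 q))"

lemma poly2_jac_lin2: "poly2 p \<Longrightarrow> poly2 q \<Longrightarrow> poly2 (jac_lin2 a b c d p q)"
  unfolding jac_lin2_def by (intro poly2_lin2 poly2_dx2 poly2_dy2)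

lemma eval2_jac_lin2:
  "poly2 p \<Longrightarrow> poly2 q \<Longrightarrow> eval2 (jac_lin2 a b c d p q) x y =
     d * eval2 (dx2 p) x y - c * eval2 (dy2 p) x y - b * eval2 (dx2 q) x y + a * eval2 (dy2 q) x y"
  unfolding jac_lin2_def by (simp add: eval2_lin2 poly2_lin2 poly2_dx2 poly2_dy2)

lemma jac_lin2_apply:
  "jac_lin2 a b c d p q m = d * dx2 p m - c * dy2 p m - b * dx2 q m + a * dy2 q m"
  by (simp add: jac_lin2_def lin2_def)

lemma mdeg_ge_2_if_ord2_gt_1:
  assumes "poly2 p" "ord2 p > 1" "m \<in> supp2 p"
  shows "mdeg m \<ge> 2"
proof -
  have "Min (mdeg ` supp2 p) \<le> mdeg m" using assms by (simp add: poly2_def)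
  moreover have "enat (Min (mdeg ` supp2 p)) > 1" using assms(2,3) by (auto simp: ord2_def split: if_splits)
  ultimately show ?thesis by (simp add: one_enat_def)
qed

lemma eval2_partials_origin_eq_0:
  assumes "poly2 P" "ord2 P > 1"
  shows "eval2 (dx2 P) 0 0 = 0" "eval2 (dy2 P) 0 0 = 0"
proof -
  have "real (fst m) * P m * 0 ^ (fst m - 1) * (0::real) ^ snd m = 0"
       "real (snd m) * P m * 0 ^ fst m * (0::real) ^ (snd m - 1) = 0" if "m \<in> supp2 P" for m
    using mdeg_ge_2_if_ord2_gt_1[OF assms that] by (cases m; auto simp: mdeg_def)+
  then show "eval2 (dx2 P) 0 0 = 0" "eval2 (dy2 P) 0 0 = 0"
    unfolding eval2_dx2[OF assms(1)] eval2_dy2[OF assms(1)] by (auto intro!: sum.neutral)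
qed

lemma jac0_eq_linear_part:
  assumes "poly2 p" "poly2 q" "ord2 p > 1" "ord2 q > 1"
  shows "jac0 a b c d p q = (\<lambda>(x,y). (a*x + b*y, c*x + d*y))"
  using eval2_partials_origin_eq_0[OF assms(1,3)] eval2_partials_origin_eq_0[OF assms(2,4)]
  by (simp add: jac0_def)

lemma jacobian_map_det_linear_part:
  assumes "poly2 p" "poly2 q" "jacobian_map a b c d p q" "ord2 p > 1" "ord2 q > 1"
  shows "a * d - b * c \<noteq> 0"
    and "jac_lin2 a b c d p q \<mu> + jac2 p q \<mu> = 0"
proof -
  obtain k where k: "k \<noteq> 0" "\<And>x y. jac_det a b c d p q x y = k"
    using assms(3) by (auto simp: jacobian_map_def)
  have "k = a * d - b * c"
    using k(2)[of 0 0] eval2_partials_origin_eq_0[OF assms(1,4)] eval2_partials_origin_eq_0[OF assms(2,5)]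
    by (simp add: jac_det_def)
  with k show "a * d - b * c \<noteq> 0" by simp
  define R where "R = lin2 1 (jac_lin2 a b c d p q) 1 (jac2 p q)"
  have pR: "poly2 R" unfolding R_def by (intro poly2_lin2 poly2_jac_lin2 poly2_jac2 assms(1,2))
  have "eval2 R x y = jac_det a b c d p q x y - (a * d - b * c)" for x y
  proof -
    have "eval2 R x y = eval2 (jac_lin2 a b c d p q) x y + eval2 (jac2 p q) x y"
      unfolding R_def using assms(1,2) by (simp add: eval2_lin2 poly2_jac_lin2 poly2_jac2)
    then show ?thesis
      unfolding eval2_jac_lin2[OF assms(1,2)] eval2_jac2[OF assms(1,2)] jac_det_def
      by (simp add: algebra_simps)
  qed
  then have "R \<mu> = 0"
    using k(2) \<open>k = a * d - b * c\<close> by (intro poly2_coeff_eq_0_if_eval2_eq_0[OF pR]) simp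
  then show "jac_lin2 a b c d p q \<mu> + jac2 p q \<mu> = 0" by (simp add: R_def lin2_def)
qed

text \<open>The monomials of \<open>jac_lin2\<close> have degree \<open>mdeg m - 1\<close> for a monomial \<open>m\<close> of \<open>p\<close> or \<open>q\<close>,
  those of \<open>jac2 p q\<close> have degree \<open>mdeg m1 + mdeg m2 - 2\<close>; the hypotheses of the theorem keep these
  two families of degrees apart.\<close>
definition degree_separated :: "poly2 \<Rightarrow> poly2 \<Rightarrow> bool" where
  "degree_separated p q \<longleftrightarrow>
     (\<forall>m1\<in>supp2 p. \<forall>m2\<in>supp2 q. \<forall>m\<in>supp2 p \<union> supp2 q. mdeg m + 1 \<noteq> mdeg m1 + mdeg m2)"

lemma supp2_jac_lin2E:
  assumes "\<mu> \<in> supp2 (jac_lin2 a b c d p q)"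
  obtains m where "m \<in> supp2 p \<union> supp2 q" "mdeg m = mdeg \<mu> + 1"
proof -
  obtain i j where \<mu>: "\<mu> = (i,j)" by (cases \<mu>)
  from assms have "p (Suc i, j) \<noteq> 0 \<or> p (i, Suc j) \<noteq> 0 \<or> q (Suc i, j) \<noteq> 0 \<or> q (i, Suc j) \<noteq> 0"
    by (auto simp: supp2_def jac_lin2_apply \<mu> dx2_def dy2_def)
  then show ?thesis
    using that[of "(Suc i, j)"] that[of "(i, Suc j)"] by (auto simp: supp2_def mdeg_def \<mu>)
qed

lemma supp2_jac2E:
  assumes "\<mu> \<in> supp2 (jac2 p q)"
  obtains m1 m2 where "m1 \<in> supp2 p" "m2 \<in> supp2 q" "mdeg m1 + mdeg m2 = mdeg \<mu> + 2"
proof -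
  obtain m1 m2 where m: "m1 \<in> supp2 p" "m2 \<in> supp2 q"
    and e: "(fst m1 + fst m2 - 1, snd m1 + snd m2 - 1) = \<mu>" and w: "jac_weight m1 m2 \<noteq> 0"
    using assms unfolding jac2_def by (rule supp2_wprod2E)
  have "fst m1 + fst m2 \<ge> 1 \<and> snd m1 + snd m2 \<ge> 1"
  proof (rule ccontr)
    assume "\<not> ?thesis"
    then have "jac_weight m1 m2 = 0" by (auto simp: jac_weight_def not_le)
    with w show False ..
  qed
  then show ?thesis using that[OF m] e by (auto simp: mdeg_def)
qed

lemma degree_separated_coeffs_eq_0:
  assumes "degree_separated p q" "jac_lin2 a b c d p q \<mu> + jac2 p q \<mu> = 0"
  shows "jac_lin2 a b c d p q \<mu> = 0" "jac2 p q \<mu> = 0"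
proof -
  have "\<mu> \<notin> supp2 (jac_lin2 a b c d p q) \<or> \<mu> \<notin> supp2 (jac2 p q)"
  proof (rule ccontr)
    assume "\<not> ?thesis"
    then have "\<mu> \<in> supp2 (jac_lin2 a b c d p q)" "\<mu> \<in> supp2 (jac2 p q)" by auto
    then obtain m m1 m2 where "m \<in> supp2 p \<union> supp2 q" "m1 \<in> supp2 p" "m2 \<in> supp2 q"
      and "mdeg m + 1 = mdeg m1 + mdeg m2"
      by (elim supp2_jac_lin2E supp2_jac2E) auto
    with assms(1) show False unfolding degree_separated_def by blast
  qed
  then show "jac_lin2 a b c d p q \<mu> = 0" "jac2 p q \<mu> = 0"
    using assms(2) by (auto simp: supp2_def)
qed

lemma gap_condition_mdeg_ne:
  assumes "gap_condition p q" "m1 \<in> supp2 p" "m2 \<in> supp2 q" "m \<in> supp2 q" "mdeg m1 \<ge> 2"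
  shows "mdeg m + 1 \<noteq> mdeg m1 + mdeg m2"
proof
  assume eq: "mdeg m + 1 = mdeg m1 + mdeg m2"
  then have "m \<noteq> m2" "int (mdeg m1) - 1 = \<bar>int (mdeg m) - int (mdeg m2)\<bar>" using assms(5) by auto
  then have "int (mdeg m1) - 1 \<in> gaps q" using assms(3,4) unfolding gaps_def by blast
  then show False using assms(1,2) by (auto simp: gap_condition_def)
qed

lemma degree_separated_if_degree_bound:
  assumes "poly2 p" "poly2 q" "enat (max (deg2 p) (deg2 q)) < ord2 p + ord2 q - 1"
  shows "degree_separated p q"
  unfolding degree_separated_def
proof (intro ballI)
  fix m1 m2 m assume m1: "m1 \<in> supp2 p" and m2: "m2 \<in> supp2 q" and m: "m \<in> supp2 p \<union> supp2 q"
  have fin: "finite (supp2 p)" "finite (supp2 q)" using assms(1,2) by (simp_all add: poly2_def)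
  have "ord2 p = enat (Min (mdeg ` supp2 p))" "ord2 q = enat (Min (mdeg ` supp2 q))"
    using m1 m2 by (auto simp: ord2_def)
  then have "max (deg2 p) (deg2 q) < Min (mdeg ` supp2 p) + Min (mdeg ` supp2 q) - 1"
    using assms(3) by (simp add: one_enat_def)
  moreover have "mdeg m \<le> max (deg2 p) (deg2 q)"
    using m fin by (auto simp: deg2_def le_max_iff_disj)
  moreover have "Min (mdeg ` supp2 p) \<le> mdeg m1" "Min (mdeg ` supp2 q) \<le> mdeg m2"
    using m1 m2 fin by simp_all
  ultimately show "mdeg m + 1 \<noteq> mdeg m1 + mdeg m2" by linarith
qed

lemma degree_separated_if_even:
  assumes "even2 p" "even2 q"
  shows "degree_separated p q"
  unfolding degree_separated_def
proof (intro ballI)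
  fix m1 m2 m assume "m1 \<in> supp2 p" "m2 \<in> supp2 q" "m \<in> supp2 p \<union> supp2 q"
  then have "even (mdeg m1)" "even (mdeg m2)" "even (mdeg m)" using assms by (auto simp: even2_def)
  then show "mdeg m + 1 \<noteq> mdeg m1 + mdeg m2" by presburger
qed

lemma degree_separated_if_odd_even_gap:
  assumes "poly2 p" "ord2 p > 1" "odd2 p" "even2 q" "gap_condition p q"
  shows "degree_separated p q"
  unfolding degree_separated_def
proof (intro ballI)
  fix m1 m2 m assume m1: "m1 \<in> supp2 p" and m2: "m2 \<in> supp2 q" and m: "m \<in> supp2 p \<union> supp2 q"
  show "mdeg m + 1 \<noteq> mdeg m1 + mdeg m2"
  proof (cases "m \<in> supp2 p")
    case True
    then have "odd (mdeg m)" "odd (mdeg m1)" "even (mdeg m2)"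
      using assms(3,4) m1 m2 by (auto simp: odd2_def even2_def)
    then show ?thesis by presburger
  next
    case False
    then show ?thesis
      using gap_condition_mdeg_ne[OF assms(5) m1 m2] mdeg_ge_2_if_ord2_gt_1[OF assms(1,2) m1] m by blast
  qed
qed

lemma degree_separated_if_sym_gap:
  assumes "poly2 p" "poly2 q" "ord2 p > 1" "ord2 q > 1" "sym_gap_condition p q"
  shows "degree_separated p q"
  unfolding degree_separated_def
proof (intro ballI)
  fix m1 m2 m assume m1: "m1 \<in> supp2 p" and m2: "m2 \<in> supp2 q" and m: "m \<in> supp2 p \<union> supp2 q"
  have gaps: "gap_condition p q" "gap_condition q p" using assms(5) by (simp_all add: sym_gap_condition_def)
  show "mdeg m + 1 \<noteq> mdeg m1 + mdeg m2"
  proof (cases "m \<in> supp2 q")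
    case True
    then show ?thesis using gap_condition_mdeg_ne[OF gaps(1) m1 m2] mdeg_ge_2_if_ord2_gt_1[OF assms(1,3) m1] by blast
  next
    case False
    then have "mdeg m + 1 \<noteq> mdeg m2 + mdeg m1"
      using gap_condition_mdeg_ne[OF gaps(2) m2 m1] mdeg_ge_2_if_ord2_gt_1[OF assms(2,4) m2] m by blast
    then show ?thesis by simp
  qed
qed

section \<open>The potential\<close>

text \<open>A potential of the form \<open>(c p - a q) dx + (d p - b q) dy\<close>: integrate the \<open>dy\<close>-coefficient in \<open>y\<close>
  and, on the monomials free of \<open>y\<close>, the \<open>dx\<close>-coefficient in \<open>x\<close>.  The form is closed exactly when
  \<open>jac_lin2 a b c d p q\<close> vanishes.\<close>
definition potential2 :: "real \<Rightarrow> real \<Rightarrow> real \<Rightarrow> real \<Rightarrow> poly2 \<Rightarrow> poly2 \<Rightarrow> poly2" where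
  "potential2 a b c d p q = (\<lambda>(i,j).
     if j \<ge> 1 then lin2 d p (-b) q (i, j - 1) / real j
     else if i \<ge> 1 then lin2 c p (-a) q (i - 1, 0) / real i else 0)"

lemma dy2_potential2: "dy2 (potential2 a b c d p q) = lin2 d p (-b) q"
  by (auto simp: fun_eq_iff dy2_def potential2_def)

lemma dx2_potential2:
  assumes "\<And>\<mu>. jac_lin2 a b c d p q \<mu> = 0"
  shows "dx2 (potential2 a b c d p q) = lin2 c p (-a) q"
proof -
  have "dx2 (potential2 a b c d p q) (i,j) = lin2 c p (-a) q (i,j)" for i j
  proof (cases j)
    case 0 then show ?thesis by (simp add: dx2_def potential2_def)
  next
    case (Suc k)
    have "real (Suc i) * (d * p (Suc i, k) - b * q (Suc i, k)) = real (Suc k) * (c * p (i, Suc k) - a * q (i, Suc k))"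
      using assms[of "(i,k)"] unfolding jac_lin2_apply dx2_def dy2_def by (simp add: algebra_simps)
    then show ?thesis by (simp add: dx2_def potential2_def Suc lin2_def)
  qed
  then show ?thesis by auto
qed

lemma poly2_potential2:
  assumes "poly2 p" "poly2 q"
  shows "poly2 (potential2 a b c d p q)"
proof -
  let ?Sy = "(\<lambda>(i,j). (i, Suc j)) ` supp2 (lin2 d p (-b) q)"
  let ?Sx = "(\<lambda>(i,j). (Suc i, j)) ` supp2 (lin2 c p (-a) q)"
  have "supp2 (potential2 a b c d p q) \<subseteq> ?Sy \<union> ?Sx"
  proof
    fix m assume m: "m \<in> supp2 (potential2 a b c d p q)"
    obtain i j where mm: "m = (i,j)" by (cases m)
    show "m \<in> ?Sy \<union> ?Sx"
    proof (cases j)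
      case 0
      with m have "i \<ge> 1" "lin2 c p (-a) q (i - 1, 0) \<noteq> 0"
        by (auto simp: supp2_def potential2_def mm split: if_splits)
      then have "(i - 1, 0) \<in> supp2 (lin2 c p (-a) q)" "m = (\<lambda>(i,j). (Suc i, j)) (i - 1, 0)"
        by (auto simp: supp2_def mm 0)
      then show ?thesis by blast
    next
      case (Suc k)
      with m have "(i, k) \<in> supp2 (lin2 d p (-b) q)" "m = (\<lambda>(i,j). (i, Suc j)) (i, k)"
        by (auto simp: supp2_def potential2_def mm)
      then show ?thesis by blast
    qed
  qed
  moreover have "finite ?Sy" "finite ?Sx" using poly2_lin2[OF assms] by (simp_all add: poly2_def)
  ultimately show ?thesis unfolding poly2_def by (meson finite_Un finite_subset)
qed

text \<open>The Hessian determinant of the potential equals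
  \<open>(a d - b c) J(p,q) - (d p_x - b q_x) \<cdot> L\<close>, where \<open>J(p,q)\<close> is the jacobian of \<open>(p,q)\<close> and
  \<open>L\<close> is the closedness defect of the form.\<close>
lemma hess2_potential2_eq_0:
  assumes "poly2 p" "poly2 q" "\<And>\<mu>. jac_lin2 a b c d p q \<mu> = 0" "\<And>\<mu>. jac2 p q \<mu> = 0"
  shows "hess2 (potential2 a b c d p q) \<mu> = 0"
proof -
  define K where "K = potential2 a b c d p q"
  have pK: "poly2 K" unfolding K_def by (rule poly2_potential2[OF assms(1,2)])
  have "eval2 (hess2 K) x y = 0" for x y
  proof -
    define px where "px = eval2 (dx2 p) x y"
    define py where "py = eval2 (dy2 p) x y"
    define qx where "qx = eval2 (dx2 q) x y"
    define qy where "qy = eval2 (dy2 q) x y"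
    have L: "d * px - c * py - b * qx + a * qy = 0"
      using eval2_zero[of "jac_lin2 a b c d p q", OF assms(3)] eval2_jac_lin2[OF assms(1,2)]
      unfolding px_def py_def qx_def qy_def by metis
    have J: "px * qy - py * qx = 0"
      using eval2_zero[of "jac2 p q", OF assms(4)] eval2_jac2[OF assms(1,2)]
      unfolding px_def py_def qx_def qy_def by metis
    have "eval2 (dx2 (dx2 K)) x y = c * px - a * qx"
      unfolding K_def dx2_potential2[OF assms(3)] dx2_lin2 px_def qx_def
      by (simp add: eval2_lin2 poly2_dx2 assms(1,2))
    moreover have "eval2 (dy2 (dy2 K)) x y = d * py - b * qy"
      unfolding K_def dy2_potential2 dy2_lin2 py_def qy_def
      by (simp add: eval2_lin2 poly2_dy2 assms(1,2))
    moreover have "eval2 (dx2 (dy2 K)) x y = d * px - b * qx"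
      unfolding K_def dy2_potential2 dx2_lin2 px_def qx_def
      by (simp add: eval2_lin2 poly2_dx2 assms(1,2))
    ultimately have "eval2 (hess2 K) x y = (c * px - a * qx) * (d * py - b * qy) - (d * px - b * qx) ^ 2"
      by (simp add: eval2_hess2[OF pK])
    also have "\<dots> = (a * d - b * c) * (px * qy - py * qx) - (d * px - b * qx) * (d * px - c * py - b * qx + a * qy)"
      by (simp add: algebra_simps power2_eq_square)
    finally show ?thesis using L J by simp
  qed
  then show ?thesis using poly2_coeff_eq_0_if_eval2_eq_0[OF poly2_hess2[OF pK]] K_def by blast
qed

section \<open>Newton polygon of a polynomial with vanishing Hessian\<close>

lemma hess2_eq_0_pair_sum:
  assumes pK: "poly2 K" and HK: "\<And>\<mu>. hess2 K \<mu> = 0" and "fst \<nu> \<ge> 2" "snd \<nu> \<ge> 2"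
  shows "(\<Sum>z\<in>{z\<in>supp2 K \<times> supp2 K. fst (fst z) + fst (snd z) = fst \<nu> \<and> snd (fst z) + snd (snd z) = snd \<nu>}.
           hess_weight (fst z) (snd z) * K (fst z) * K (snd z)) = 0"
proof -
  let ?e = "\<lambda>m1 m2. (fst m1 + fst m2 - 2, snd m1 + snd m2 - 2)"
  define E where "E = {z\<in>supp2 K \<times> supp2 K. ?e (fst z) (snd z) = (fst \<nu> - 2, snd \<nu> - 2)}"
  define T where "T = {z\<in>supp2 K \<times> supp2 K. fst (fst z) + fst (snd z) = fst \<nu> \<and> snd (fst z) + snd (snd z) = snd \<nu>}"
  have "(\<Sum>z\<in>T. hess_weight (fst z) (snd z) * K (fst z) * K (snd z))
      = (\<Sum>z\<in>E. hess_weight (fst z) (snd z) * K (fst z) * K (snd z))"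
  proof (rule sum.mono_neutral_left)
    show "finite E" using pK by (simp add: E_def poly2_def)
    show "T \<subseteq> E" by (auto simp: T_def E_def)
    show "\<forall>z\<in>E - T. hess_weight (fst z) (snd z) * K (fst z) * K (snd z) = 0"
    proof
      fix z assume z: "z \<in> E - T"
      obtain i1 j1 i2 j2 where zz: "z = ((i1,j1),(i2,j2))" by (metis prod.collapse)
      from z assms(3,4) have "i1 + i2 \<le> 1 \<or> j1 + j2 \<le> 1" by (auto simp: E_def T_def zz)
      then have "i1 = 0 \<or> (i1 = 1 \<and> i2 = 0) \<or> j2 = 0 \<or> (j2 = 1 \<and> j1 = 0)" by auto
      then show "hess_weight (fst z) (snd z) * K (fst z) * K (snd z) = 0"
        by (auto simp: zz hess_weight_def)
    qed
  qed
  also have "\<dots> = hess2 K (fst \<nu> - 2, snd \<nu> - 2)" by (simp add: hess2_def wprod2_def E_def)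
  finally show ?thesis using HK by (simp add: T_def)
qed

text \<open>For the rightmost monomial \<open>(s, r)\<close> of the top row, the pair sum at \<open>(2 s, 2 r)\<close> has the single
  term \<open>((s, r), (s, r))\<close>, of weight \<open>- s r (s + r - 1) \<noteq> 0\<close>.\<close>
lemma hess2_eq_0_top_row:
  assumes pK: "poly2 K" and HK: "\<And>\<mu>. hess2 K \<mu> = 0" and r: "r \<ge> 1"
    and bound: "\<And>m. m \<in> supp2 K \<Longrightarrow> snd m \<le> r" and im: "(i, r) \<in> supp2 K"
  shows "i = 0"
proof (rule ccontr)
  assume "i \<noteq> 0"
  define I where "I = {i. (i, r) \<in> supp2 K}"
  have fin: "finite I"
    using pK unfolding I_def poly2_def by (rule finite_subset[rotated, OF finite_imageI[of _ fst]]) force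
  define s where "s = Max I"
  have sI: "s \<in> I" using fin im unfolding s_def I_def by (intro Max_in) auto
  have "i \<le> s" using Max_ge[OF fin] im by (simp add: s_def I_def)
  then have s: "s \<ge> 1" using \<open>i \<noteq> 0\<close> by simp
  have T: "{z\<in>supp2 K \<times> supp2 K. fst (fst z) + fst (snd z) = 2*s \<and> snd (fst z) + snd (snd z) = 2*r}
         = {((s,r),(s,r))}" (is "?T = _")
  proof
    show "?T \<subseteq> {((s,r),(s,r))}"
    proof
      fix z assume z: "z \<in> ?T"
      obtain i1 j1 i2 j2 where zz: "z = ((i1,j1),(i2,j2))" by (metis prod.collapse)
      have m: "(i1,j1) \<in> supp2 K" "(i2,j2) \<in> supp2 K" and e: "i1 + i2 = 2*s" "j1 + j2 = 2*r"
        using z by (auto simp: zz)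
      have "j1 = r" "j2 = r" using bound[OF m(1)] bound[OF m(2)] e by auto
      then have "i1 \<le> s" "i2 \<le> s" using m fin by (auto simp: s_def I_def)
      then show "z \<in> {((s,r),(s,r))}" using e \<open>j1 = r\<close> \<open>j2 = r\<close> zz by auto
    qed
  qed (use sI in \<open>auto simp: I_def\<close>)
  have "hess_weight (s,r) (s,r) * K (s,r) * K (s,r) = 0"
    using hess2_eq_0_pair_sum[OF pK HK, of "(2*s, 2*r)"] s r by (simp add: T)
  moreover have "hess_weight (s,r) (s,r) \<noteq> 0"
  proof -
    have "hess_weight (s,r) (s,r) = - (real s * real r * (real s + real r - 1))"
      by (simp add: hess_weight_def algebra_simps)
    moreover have "real s * real r * (real s + real r - 1) > 0" using s r by simp
    ultimately show ?thesis by linarith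
  qed
  moreover have "K (s,r) \<noteq> 0" using sI by (simp add: I_def supp2_def)
  ultimately show False by simp
qed

lemma of_nat_divide_le_iff:
  "0 < b \<Longrightarrow> 0 < d \<Longrightarrow> real a / real b \<le> real c / real d \<longleftrightarrow> a * d \<le> c * b"
  by (simp add: divide_le_eq le_divide_eq flip: of_nat_mult)

lemma of_nat_divide_eq_iff:
  "0 < b \<Longrightarrow> 0 < d \<Longrightarrow> real a / real b = real c / real d \<longleftrightarrow> a * d = c * b"
  by (simp add: divide_eq_eq eq_divide_eq flip: of_nat_mult)

text \<open>Rotate a line about \<open>(0, r)\<close> until it supports \<open>S\<close> from above: its slope is the largest ratio
  \<open>i / (r - j)\<close> over the points \<open>(i, j) \<in> S\<close> with \<open>j < r\<close>.\<close>
lemma obtain_supporting_vertex: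
  fixes S :: "(nat \<times> nat) set"
  assumes fin: "finite S" and m0: "m0 \<in> S" "snd m0 < r"
    and bound: "\<And>m. m \<in> S \<Longrightarrow> snd m \<le> r" and top_row: "\<And>m. m \<in> S \<Longrightarrow> snd m = r \<Longrightarrow> fst m = 0"
  obtains i j where "(i, j) \<in> S" "j < r" "fst m0 * (r - j) \<le> i * (r - snd m0)"
    and "\<And>m. m \<in> S \<Longrightarrow> fst m * (r - j) + i * snd m \<le> i * r"
    and "\<And>m. m \<in> S \<Longrightarrow> fst m * (r - j) + i * snd m = i * r \<Longrightarrow> snd m < r \<Longrightarrow> snd m \<le> j"
proof -
  define S' where "S' = {m\<in>S. snd m < r}"
  define slope where "slope = (\<lambda>m::nat\<times>nat. real (fst m) / real (r - snd m))"
  define \<sigma> where "\<sigma> = Max (slope ` S')"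
  define T where "T = {m\<in>S'. slope m = \<sigma>}"
  define j where "j = Max (snd ` T)"
  have finS': "finite S'" using fin by (simp add: S'_def)
  have m0S': "m0 \<in> S'" using m0 by (simp add: S'_def)
  have slope_le: "slope m \<le> \<sigma>" if "m \<in> S'" for m using finS' that by (simp add: \<sigma>_def)
  have "\<sigma> \<in> slope ` S'" using finS' m0S' unfolding \<sigma>_def by (intro Max_in) auto
  then have "T \<noteq> {}" by (auto simp: T_def)
  moreover have finT: "finite T" using finS' by (simp add: T_def)
  ultimately have "j \<in> snd ` T" unfolding j_def by (intro Max_in) auto
  then obtain i where iT: "(i, j) \<in> T" by force
  have lowest_in_T: "snd m \<le> j" if "m \<in> T" for m using finT that by (simp add: j_def)
  have v: "(i, j) \<in> S" "j < r" and \<sigma>: "\<sigma> = real i / real (r - j)"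
    using iT by (auto simp: T_def S'_def slope_def)
  have below_slope: "fst m * (r - j) \<le> i * (r - snd m)" if "m \<in> S" "snd m < r" for m
  proof -
    have "real (fst m) / real (r - snd m) \<le> real i / real (r - j)"
      using slope_le[of m] that unfolding \<sigma> by (simp add: S'_def slope_def)
    then show ?thesis using that(2) v(2) by (metis of_nat_divide_le_iff zero_less_diff)
  qed
  show ?thesis
  proof (rule that[OF v below_slope[OF m0]])
    fix m assume m: "m \<in> S"
    show "fst m * (r - j) + i * snd m \<le> i * r"
    proof (cases "snd m < r")
      case True
      moreover have "i * (r - snd m) + i * snd m = i * r" using True by (simp flip: add_mult_distrib2)
      ultimately show ?thesis using below_slope[OF m] by linarith
    next
      case False
      then show ?thesis using top_row[OF m] bound[OF m] by simp
    qed
    assume "fst m * (r - j) + i * snd m = i * r" "snd m < r"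
    moreover have "i * (r - snd m) + i * snd m = i * r" using \<open>snd m < r\<close> by (simp flip: add_mult_distrib2)
    ultimately have "fst m * (r - j) = i * (r - snd m)" by linarith
    then have "real (fst m) / real (r - snd m) = real i / real (r - j)"
      using \<open>snd m < r\<close> v(2) by (metis of_nat_divide_eq_iff zero_less_diff)
    then have "m \<in> T" using m \<open>snd m < r\<close> \<sigma> by (simp add: T_def S'_def slope_def)
    then show "snd m \<le> j" by (rule lowest_in_T)
  qed
qed

lemma supporting_vertex_pairs:
  fixes S :: "(nat \<times> nat) set"
  assumes top: "(0, r) \<in> S" and v: "(i, j) \<in> S" "j < r" "0 < i"
    and below: "\<And>m. m \<in> S \<Longrightarrow> fst m * (r - j) + i * snd m \<le> i * r"
    and lowest: "\<And>m. m \<in> S \<Longrightarrow> fst m * (r - j) + i * snd m = i * r \<Longrightarrow> snd m < r \<Longrightarrow> snd m \<le> j"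
  shows "{z\<in>S \<times> S. fst (fst z) + fst (snd z) = i \<and> snd (fst z) + snd (snd z) = r + j}
       = {((0,r),(i,j)), ((i,j),(0,r))}" (is "?T = _")
proof
  show "?T \<subseteq> {((0,r),(i,j)), ((i,j),(0,r))}"
  proof
    fix z assume z: "z \<in> ?T"
    obtain i1 j1 i2 j2 where zz: "z = ((i1,j1),(i2,j2))" by (metis prod.collapse)
    have m: "(i1,j1) \<in> S" "(i2,j2) \<in> S" and e: "i1 + i2 = i" "j1 + j2 = r + j"
      using z by (auto simp: zz)
    have b: "i1 * (r - j) + i * j1 \<le> i * r" "i2 * (r - j) + i * j2 \<le> i * r"
      using below[OF m(1)] below[OF m(2)] by simp_all
    have "(i1 + i2) * (r - j) + i * (j1 + j2) = i * ((r - j) + (r + j))"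
      unfolding e by (simp add: algebra_simps)
    also have "\<dots> = 2 * (i * r)" using v(2) by simp
    finally have "(i1 * (r - j) + i * j1) + (i2 * (r - j) + i * j2) = 2 * (i * r)"
      by (simp add: algebra_simps)
    then have on_line: "i1 * (r - j) + i * j1 = i * r" "i2 * (r - j) + i * j2 = i * r"
      using b by simp_all
    have "i * j1 \<le> i * r" "i * j2 \<le> i * r" using b by linarith+
    then have "j1 \<le> r" "j2 \<le> r" using v(3) by simp_all
    show "z \<in> {((0,r),(i,j)), ((i,j),(0,r))}"
    proof (cases "j1 = r \<or> j2 = r")
      case True
      moreover have "j1 = r \<Longrightarrow> i1 = 0" "j2 = r \<Longrightarrow> i2 = 0" using on_line v(2) by auto
      ultimately show ?thesis using e zz by auto
    next
      case False
      then have "j1 \<le> j" "j2 \<le> j" using lowest[OF m(1)] lowest[OF m(2)] on_line \<open>j1 \<le> r\<close> \<open>j2 \<le> r\<close>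
        by simp_all
      then show ?thesis using e v(2) by simp
    qed
  qed
qed (use top v in auto)

text \<open>At the lowest vertex \<open>(i, j)\<close> of a supporting line through \<open>(0, r)\<close>, the Hessian coefficient of
  \<open>x^(i-2) y^(r+j-2)\<close> comes from the pair \<open>(0, r)\<close>, \<open>(i, j)\<close> alone and has weight \<open>i (i-1) r (r-1)\<close>.\<close>
lemma hess2_eq_0_steep_point:
  assumes pK: "poly2 K" and HK: "\<And>\<mu>. hess2 K \<mu> = 0" and r: "r \<ge> 2"
    and bound: "\<And>m. m \<in> supp2 K \<Longrightarrow> snd m \<le> r" and top: "(0, r) \<in> supp2 K"
    and m0: "m0 \<in> supp2 K" "snd m0 < r" "fst m0 + snd m0 \<ge> r"
  shows "(1, r - 1) \<in> supp2 K" and "\<forall>m\<in>supp2 K. fst m + snd m \<le> r"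
proof -
  have top_row: "fst m = 0" if "m \<in> supp2 K" "snd m = r" for m
    using hess2_eq_0_top_row[OF pK HK _ bound, of "fst m"] that r by (cases m) auto
  obtain i j where v: "(i, j) \<in> supp2 K" "j < r" and m0_below: "fst m0 * (r - j) \<le> i * (r - snd m0)"
    and below: "\<And>m. m \<in> supp2 K \<Longrightarrow> fst m * (r - j) + i * snd m \<le> i * r"
    and lowest: "\<And>m. m \<in> supp2 K \<Longrightarrow> fst m * (r - j) + i * snd m = i * r \<Longrightarrow> snd m < r \<Longrightarrow> snd m \<le> j"
    using obtain_supporting_vertex[of "supp2 K" m0 r] pK m0 bound top_row by (auto simp: poly2_def)
  have "(r - j) * (r - snd m0) \<le> (r - j) * fst m0" using m0(3) by (intro mult_left_mono) linarith+
  also have "\<dots> \<le> i * (r - snd m0)" using m0_below by (simp add: mult.commute)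
  finally have ij: "r - j \<le> i" using m0(2) by (metis mult_le_cancel2 zero_less_diff)
  have "i \<le> 1"
  proof (rule ccontr)
    assume "\<not> i \<le> 1"
    have "hess_weight (i,j) (0,r) * K (i,j) * K (0,r) = 0"
      using hess2_eq_0_pair_sum[OF pK HK, of "(i, r + j)"] \<open>\<not> i \<le> 1\<close> r v(2)
      by (simp add: supporting_vertex_pairs[OF top v _ below lowest] hess_weight_def)
    moreover have "hess_weight (i,j) (0,r) = real i * (real i - 1) * real r * (real r - 1)"
      by (simp add: hess_weight_def)
    moreover have "real i * (real i - 1) * real r * (real r - 1) \<noteq> 0" using \<open>\<not> i \<le> 1\<close> r by simp
    moreover have "K (i,j) \<noteq> 0" "K (0,r) \<noteq> 0" using top v by (auto simp: supp2_def)
    ultimately show False by simp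
  qed
  with ij v(2) have i: "i = 1" and j: "j = r - 1" by linarith+
  show "(1, r - 1) \<in> supp2 K" using v(1) i j by simp
  show "\<forall>m\<in>supp2 K. fst m + snd m \<le> r"
  proof
    fix m assume m: "m \<in> supp2 K"
    have "fst m * (r - (r - 1)) + snd m \<le> r" using below[OF m] i j by simp
    then show "fst m + snd m \<le> r" using r by simp
  qed
qed

lemma hess2_eq_0_total_degree_le:
  assumes pK: "poly2 K" and HK: "\<And>\<mu>. hess2 K \<mu> = 0" and r: "r \<ge> 2"
    and bound: "\<And>m. m \<in> supp2 K \<Longrightarrow> snd m \<le> r" and top: "(0, r) \<in> supp2 K"
    and m: "m \<in> supp2 K"
  shows "fst m + snd m \<le> r"
proof (cases "\<exists>m0\<in>supp2 K. snd m0 < r \<and> fst m0 + snd m0 \<ge> r")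
  case True
  then show ?thesis using hess2_eq_0_steep_point[OF pK HK r bound top] m by blast
next
  case False
  moreover have "snd m = r \<Longrightarrow> fst m = 0"
    using hess2_eq_0_top_row[OF pK HK _ bound, of "fst m"] m r by (cases m) auto
  ultimately show ?thesis using m bound[OF m] by (cases "snd m < r") auto
qed

section \<open>Linear changes of variables\<close>

lemma has_real_derivative_eval2_line:
  assumes "poly2 K"
  shows "((\<lambda>t. eval2 K (x0 + a * t) (y0 + c * t)) has_real_derivative
          a * eval2 (dx2 K) (x0 + a * t) (y0 + c * t) + c * eval2 (dy2 K) (x0 + a * t) (y0 + c * t)) (at t)"
proof -
  have "((\<lambda>t. \<Sum>m\<in>supp2 K. K m * (x0 + a * t) ^ fst m * (y0 + c * t) ^ snd m) has_real_derivative
     (\<Sum>m\<in>supp2 K. K m * (real (fst m) * (x0 + a * t) ^ (fst m - 1) * a) * (y0 + c * t) ^ snd m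
          + K m * (x0 + a * t) ^ fst m * (real (snd m) * (y0 + c * t) ^ (snd m - 1) * c))) (at t)"
    by (rule DERIV_sum) (rule derivative_eq_intros refl | simp)+
  moreover have "(\<Sum>m\<in>supp2 K. K m * (real (fst m) * (x0 + a * t) ^ (fst m - 1) * a) * (y0 + c * t) ^ snd m
          + K m * (x0 + a * t) ^ fst m * (real (snd m) * (y0 + c * t) ^ (snd m - 1) * c))
      = a * eval2 (dx2 K) (x0 + a * t) (y0 + c * t) + c * eval2 (dy2 K) (x0 + a * t) (y0 + c * t)"
    unfolding eval2_dx2[OF assms] eval2_dy2[OF assms]
    by (simp add: sum.distrib sum_distrib_left mult_ac)
  ultimately show ?thesis by (simp add: eval2_def)
qed

lemma eval2_partials_linear_subst:
  assumes pK: "poly2 K" and pK': "poly2 K'"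
    and eq: "\<And>x y. eval2 K' x y = eval2 K (a*x + b*y) (c*x + d*y)"
  shows "eval2 (dx2 K') x y = eval2 (lin2 a (dx2 K) c (dy2 K)) (a*x + b*y) (c*x + d*y)"
    and "eval2 (dy2 K') x y = eval2 (lin2 b (dx2 K) d (dy2 K)) (a*x + b*y) (c*x + d*y)"
proof -
  have "(\<lambda>t. eval2 K' t y) = (\<lambda>t. eval2 K (b*y + a*t) (d*y + c*t))"
    by (simp add: eq algebra_simps)
  then have "eval2 (dx2 K') x y = a * eval2 (dx2 K) (b*y + a*x) (d*y + c*x) + c * eval2 (dy2 K) (b*y + a*x) (d*y + c*x)"
    using has_real_derivative_eval2_x[OF pK', of y x] has_real_derivative_eval2_line[OF pK, of "b*y" a "d*y" c x]
    by (metis DERIV_unique)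
  then show "eval2 (dx2 K') x y = eval2 (lin2 a (dx2 K) c (dy2 K)) (a*x + b*y) (c*x + d*y)"
    by (simp add: eval2_lin2 poly2_dx2 poly2_dy2 pK add.commute)
  have "(\<lambda>t. eval2 K' x t) = (\<lambda>t. eval2 K (a*x + b*t) (c*x + d*t))"
    by (simp add: eq)
  then have "eval2 (dy2 K') x y = b * eval2 (dx2 K) (a*x + b*y) (c*x + d*y) + d * eval2 (dy2 K) (a*x + b*y) (c*x + d*y)"
    using has_real_derivative_eval2_y[OF pK', of x y] has_real_derivative_eval2_line[OF pK, of "a*x" b "c*x" d y]
    by (metis DERIV_unique)
  then show "eval2 (dy2 K') x y = eval2 (lin2 b (dx2 K) d (dy2 K)) (a*x + b*y) (c*x + d*y)"
    by (simp add: eval2_lin2 poly2_dx2 poly2_dy2 pK)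
qed

text \<open>By the chain rule the Hessian determinant picks up the factor \<open>(a d - b c)^2\<close>.\<close>
lemma hess2_linear_subst_eq_0:
  assumes pK: "poly2 K" and pK': "poly2 K'" and HK: "\<And>\<mu>. hess2 K \<mu> = 0"
    and eq: "\<And>x y. eval2 K' x y = eval2 K (a*x + b*y) (c*x + d*y)"
  shows "hess2 K' \<mu> = 0"
proof -
  have "eval2 (hess2 K') x y = 0" for x y
  proof -
    define u where "u = a*x + b*y"
    define v where "v = c*x + d*y"
    define X where "X = eval2 (dx2 (dx2 K)) u v"
    define Y where "Y = eval2 (dy2 (dy2 K)) u v"
    define Z where "Z = eval2 (dx2 (dy2 K)) u v"
    have lx: "poly2 (lin2 a (dx2 K) c (dy2 K))" and ly: "poly2 (lin2 b (dx2 K) d (dy2 K))"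
      by (simp_all add: poly2_lin2 poly2_dx2 poly2_dy2 pK)
    note dx = eval2_partials_linear_subst[OF pK pK' eq]
    have "eval2 (dx2 (dx2 K')) x y = a * (a * X + c * Z) + c * (a * Z + c * Y)"
      using eval2_partials_linear_subst(1)[OF lx poly2_dx2[OF pK'] dx(1), of x y]
      unfolding dx2_lin2 dy2_lin2 dx2_dy2_commute u_def[symmetric] v_def[symmetric] X_def Y_def Z_def
      by (simp add: eval2_lin2 poly2_lin2 poly2_dx2 poly2_dy2 pK)
    moreover have "eval2 (dy2 (dy2 K')) x y = b * (b * X + d * Z) + d * (b * Z + d * Y)"
      using eval2_partials_linear_subst(2)[OF ly poly2_dy2[OF pK'] dx(2), of x y]
      unfolding dx2_lin2 dy2_lin2 dx2_dy2_commute u_def[symmetric] v_def[symmetric] X_def Y_def Z_def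
      by (simp add: eval2_lin2 poly2_lin2 poly2_dx2 poly2_dy2 pK)
    moreover have "eval2 (dx2 (dy2 K')) x y = a * (b * X + d * Z) + c * (b * Z + d * Y)"
      using eval2_partials_linear_subst(1)[OF ly poly2_dy2[OF pK'] dx(2), of x y]
      unfolding dx2_lin2 dy2_lin2 dx2_dy2_commute u_def[symmetric] v_def[symmetric] X_def Y_def Z_def
      by (simp add: eval2_lin2 poly2_lin2 poly2_dx2 poly2_dy2 pK)
    ultimately have "eval2 (hess2 K') x y = (a*d - b*c)^2 * (X * Y - Z^2)"
      by (simp add: eval2_hess2[OF pK'] power2_eq_square algebra_simps)
    also have "X * Y - Z^2 = 0"
      using eval2_zero[of "hess2 K", OF HK] by (simp add: X_def Y_def Z_def eval2_hess2[OF pK, symmetric])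
    finally show ?thesis by simp
  qed
  then show ?thesis using poly2_coeff_eq_0_if_eval2_eq_0[OF poly2_hess2[OF pK']] by blast
qed

definition swap2 :: "poly2 \<Rightarrow> poly2" where
  "swap2 K = (\<lambda>m. K (snd m, fst m))"

lemma supp2_swap2: "supp2 (swap2 K) = prod.swap ` supp2 K"
  by (auto simp: supp2_def swap2_def image_iff)

lemma poly2_swap2: "poly2 K \<Longrightarrow> poly2 (swap2 K)"
  by (simp add: poly2_def supp2_swap2)

lemma eval2_swap2: "eval2 (swap2 K) x y = eval2 K y x"
proof -
  have "eval2 (swap2 K) x y = (\<Sum>m\<in>supp2 K. swap2 K (prod.swap m) * x ^ snd m * y ^ fst m)"
    unfolding eval2_def supp2_swap2 by (subst sum.reindex) auto
  then show ?thesis by (simp add: eval2_def swap2_def mult_ac)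
qed

text \<open>The coefficients of \<open>K(x, y + l x)\<close>.\<close>
definition shear2 :: "real \<Rightarrow> poly2 \<Rightarrow> poly2" where
  "shear2 l K = (\<lambda>(i,j). \<Sum>k\<le>i. K (i - k, j + k) * real ((j + k) choose k) * l ^ k)"

lemma supp2_shear2_subset:
  "supp2 (shear2 l K) \<subseteq> (\<lambda>z. (fst (fst z) + snd z, snd (fst z) - snd z)) ` Sigma (supp2 K) (\<lambda>m. {..snd m})"
proof
  fix \<mu> assume "\<mu> \<in> supp2 (shear2 l K)"
  then obtain i j where \<mu>: "\<mu> = (i,j)" and "(\<Sum>k\<le>i. K (i - k, j + k) * real ((j + k) choose k) * l ^ k) \<noteq> 0"
    by (cases \<mu>) (auto simp: supp2_def shear2_def)
  then obtain k where "k \<le> i" "K (i - k, j + k) \<noteq> 0"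
    by (metis (no_types, lifting) atMost_iff mult_eq_0_iff sum.neutral)
  then show "\<mu> \<in> (\<lambda>z. (fst (fst z) + snd z, snd (fst z) - snd z)) ` Sigma (supp2 K) (\<lambda>m. {..snd m})"
    by (intro image_eqI[of _ _ "((i - k, j + k), k)"]) (auto simp: \<mu> supp2_def)
qed

lemma poly2_shear2: "poly2 K \<Longrightarrow> poly2 (shear2 l K)"
  unfolding poly2_def by (rule finite_subset[OF supp2_shear2_subset]) auto

lemma eval2_shear2:
  assumes pK: "poly2 K"
  shows "eval2 (shear2 l K) x y = eval2 K x (l * x + y)"
proof -
  define Sg where "Sg = Sigma (supp2 K) (\<lambda>m. {..snd m})"
  define \<phi> where "\<phi> = (\<lambda>z::(nat\<times>nat)\<times>nat. (fst (fst z) + snd z, snd (fst z) - snd z))"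
  define g where "g = (\<lambda>z::(nat\<times>nat)\<times>nat. K (fst z) * real (snd (fst z) choose snd z) * l ^ snd z
                         * x ^ (fst (fst z) + snd z) * y ^ (snd (fst z) - snd z))"
  have fin: "finite Sg" using pK by (simp add: Sg_def poly2_def)
  have "eval2 K x (l * x + y) = (\<Sum>m\<in>supp2 K. \<Sum>k\<le>snd m. g (m, k))"
    unfolding eval2_def
    by (rule sum.cong[OF refl]) (simp add: binomial_ring g_def sum_distrib_left power_mult_distrib power_add mult_ac)
  also have "\<dots> = (\<Sum>z\<in>Sg. g z)" unfolding Sg_def using pK by (subst sum.Sigma) (auto simp: poly2_def)
  also have "\<dots> = (\<Sum>\<mu>\<in>\<phi> ` Sg. \<Sum>z\<in>{z\<in>Sg. \<phi> z = \<mu>}. g z)" by (rule sum.image_gen[OF fin])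
  also have "\<dots> = (\<Sum>\<mu>\<in>\<phi> ` Sg. shear2 l K \<mu> * x ^ fst \<mu> * y ^ snd \<mu>)"
  proof (rule sum.cong[OF refl])
    fix \<mu> :: "nat \<times> nat"
    obtain i j where \<mu>: "\<mu> = (i,j)" by (cases \<mu>)
    define Ks where "Ks = {k\<in>{..i}. (i - k, j + k) \<in> supp2 K}"
    have "{z\<in>Sg. \<phi> z = \<mu>} = (\<lambda>k. ((i - k, j + k), k)) ` Ks"
      by (force simp: Ks_def Sg_def \<phi>_def \<mu> image_iff)
    then have "(\<Sum>z\<in>{z\<in>Sg. \<phi> z = \<mu>}. g z) = (\<Sum>k\<in>Ks. g ((i - k, j + k), k))"
      by (simp add: sum.reindex inj_on_def)
    also have "\<dots> = (\<Sum>k\<in>Ks. K (i - k, j + k) * real ((j + k) choose k) * l ^ k) * x ^ i * y ^ j"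
      by (simp add: sum_distrib_right g_def Ks_def)
    also have "(\<Sum>k\<in>Ks. K (i - k, j + k) * real ((j + k) choose k) * l ^ k) = shear2 l K \<mu>"
      unfolding shear2_def \<mu> prod.case
      by (rule sum.mono_neutral_left) (auto simp: Ks_def supp2_def)
    finally show "(\<Sum>z\<in>{z\<in>Sg. \<phi> z = \<mu>}. g z) = shear2 l K \<mu> * x ^ fst \<mu> * y ^ snd \<mu>"
      by (simp add: \<mu>)
  qed
  also have "\<dots> = eval2 (shear2 l K) x y"
    using supp2_shear2_subset fin
    by (intro eval2_eq_sum_superset[symmetric]) (auto simp: Sg_def \<phi>_def)
  finally show ?thesis ..
qed

lemma shear2_coeffs:
  assumes "\<And>m. m \<in> supp2 K \<Longrightarrow> fst m + snd m \<le> r" and "r \<ge> 1"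
  shows "r < i + j \<Longrightarrow> shear2 l K (i, j) = 0"
    and "shear2 l K (0, r) = K (0, r)"
    and "shear2 l K (1, r - 1) = K (1, r - 1) + K (0, r) * real r * l"
proof -
  assume "r < i + j"
  then have "K (i - k, j + k) = 0" if "k \<le> i" for k
    using assms(1)[of "(i - k, j + k)"] that by (auto simp: supp2_def)
  then show "shear2 l K (i, j) = 0" by (simp add: shear2_def)
next
  show "shear2 l K (0, r) = K (0, r)" by (simp add: shear2_def)
next
  have "r - 1 + 1 = r" using assms(2) by simp
  then show "shear2 l K (1, r - 1) = K (1, r - 1) + K (0, r) * real r * l"
    by (simp add: shear2_def)
qed

section \<open>Polynomials with vanishing Hessian are ridge functions\<close>

definition ridge :: "(real \<Rightarrow> real \<Rightarrow> real) \<Rightarrow> bool" where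
  "ridge f \<longleftrightarrow> (\<exists>\<alpha> \<beta> (A :: nat \<Rightarrow> real) N cx cy. (\<alpha>, \<beta>) \<noteq> (0, 0) \<and>
     (\<forall>x y. f x y = (\<Sum>k\<le>N. A k * (\<alpha> * x + \<beta> * y) ^ k) + cx * x + cy * y))"

lemma ridgeI:
  assumes "(\<alpha>, \<beta>) \<noteq> (0, 0)" and "\<And>x y. f x y = (\<Sum>k\<le>N. A k * (\<alpha> * x + \<beta> * y) ^ k) + cx * x + cy * y"
  shows "ridge f"
  using assms unfolding ridge_def by blast

lemma ridge_linear_subst:
  assumes "ridge f" "a * d - b * c \<noteq> 0"
  shows "ridge (\<lambda>x y. f (a*x + b*y) (c*x + d*y))"
proof -
  obtain \<alpha> \<beta> A N e1 e2 where ab: "(\<alpha>, \<beta>) \<noteq> (0, 0)"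
    and f: "\<And>x y. f x y = (\<Sum>k\<le>N. A k * (\<alpha> * x + \<beta> * y) ^ k) + e1 * x + e2 * y"
    using assms(1) unfolding ridge_def by blast
  have "(\<alpha> * a + \<beta> * c, \<alpha> * b + \<beta> * d) \<noteq> (0, 0)"
  proof
    assume 0: "(\<alpha> * a + \<beta> * c, \<alpha> * b + \<beta> * d) = (0, 0)"
    have "\<alpha> * (a * d - b * c) = d * (\<alpha> * a + \<beta> * c) - c * (\<alpha> * b + \<beta> * d)"
      "\<beta> * (a * d - b * c) = a * (\<alpha> * b + \<beta> * d) - b * (\<alpha> * a + \<beta> * c)"
      by (simp_all add: algebra_simps)
    then show False using 0 ab assms(2) by simp
  qed
  moreover have "f (a*x + b*y) (c*x + d*y)
      = (\<Sum>k\<le>N. A k * ((\<alpha> * a + \<beta> * c) * x + (\<alpha> * b + \<beta> * d) * y) ^ k)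
        + (e1 * a + e2 * c) * x + (e1 * b + e2 * d) * y" for x y
    unfolding f by (simp add: algebra_simps)
  ultimately show ?thesis by (rule ridgeI)
qed

lemma ridge_if_y_degree_le_1:
  assumes pK: "poly2 K" and HK: "\<And>\<mu>. hess2 K \<mu> = 0" and b: "\<And>m. m \<in> supp2 K \<Longrightarrow> snd m \<le> 1"
  shows "ridge (eval2 K)"
proof -
  obtain n where n: "supp2 K \<subseteq> {..n} \<times> {..n}" using poly2_obtain_box[OF pK] .
  have "i = 0" if "(i, 1) \<in> supp2 K" for i
    using hess2_eq_0_top_row[OF pK HK _ b that] by simp
  then have sub: "supp2 K \<subseteq> insert (0, 1) ((\<lambda>i. (i, 0)) ` {..n})"
    using n b by (force simp: image_iff le_Suc_eq)
  show ?thesis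
  proof (rule ridgeI[where \<alpha> = 1 and \<beta> = 0 and A = "\<lambda>i. K (i, 0)" and N = n and cx = 0 and cy = "K (0, 1)"])
    fix x y
    have "eval2 K x y = (\<Sum>m\<in>insert (0, 1) ((\<lambda>i. (i, 0)) ` {..n}). K m * x ^ fst m * y ^ snd m)"
      by (rule eval2_eq_sum_superset[OF _ sub]) simp
    also have "\<dots> = K (0, 1) * y + (\<Sum>i\<le>n. K (i, 0) * x ^ i)"
      by (subst sum.insert) (auto simp: sum.reindex inj_on_def)
    finally show "eval2 K x y = (\<Sum>i\<le>n. K (i, 0) * (1 * x + 0 * y) ^ i) + 0 * x + K (0, 1) * y" by simp
  qed simp
qed

text \<open>Without the monomial \<open>x y^(r-1)\<close>, \<open>y^r\<close> is the only monomial on the antidiagonal \<open>i + j = r\<close>.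
  If the degree \<open>\<rho>\<close> in \<open>x\<close> were at least 2, the same analysis applied to the swapped polynomial
  would put \<open>x^\<rho>\<close> on that antidiagonal.\<close>
lemma hess2_eq_0_x_degree_le_1:
  assumes pK: "poly2 K" and HK: "\<And>\<mu>. hess2 K \<mu> = 0" and r: "r \<ge> 2"
    and deg: "\<And>m. m \<in> supp2 K \<Longrightarrow> fst m + snd m \<le> r" and top: "(0, r) \<in> supp2 K"
    and no_corner: "K (1, r - 1) = 0" and m: "m \<in> supp2 K"
  shows "fst m \<le> 1"
proof (rule ccontr)
  assume "\<not> fst m \<le> 1"
  have bound: "\<And>m. m \<in> supp2 K \<Longrightarrow> snd m \<le> r" using deg by fastforce
  have no_edge: "m' \<notin> supp2 K" if "snd m' < r" "fst m' + snd m' = r" for m'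
    using hess2_eq_0_steep_point(1)[OF pK HK r bound top, of m'] that no_corner by (auto simp: supp2_def)
  define K2 where "K2 = swap2 K"
  have pK2: "poly2 K2" unfolding K2_def by (rule poly2_swap2[OF pK])
  have HK2: "\<And>\<mu>. hess2 K2 \<mu> = 0"
    using hess2_linear_subst_eq_0[OF pK pK2 HK, of 0 1 1 0] by (simp add: K2_def eval2_swap2)
  have supp: "(i, j) \<in> supp2 K2 \<longleftrightarrow> (j, i) \<in> supp2 K" for i j by (simp add: K2_def supp2_def swap2_def)
  have fin: "finite (supp2 K)" using pK by (simp add: poly2_def)
  define \<rho> where "\<rho> = Max (fst ` supp2 K)"
  have bound2: "\<And>m. m \<in> supp2 K2 \<Longrightarrow> snd m \<le> \<rho>"
    using fin supp unfolding \<rho>_def by (metis Max_ge finite_imageI fst_conv image_eqI prod.collapse)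
  have "\<rho> \<in> fst ` supp2 K" using fin m unfolding \<rho>_def by (intro Max_in) auto
  then obtain j0 where j0: "(\<rho>, j0) \<in> supp2 K" by force
  have "fst m \<le> \<rho>" using fin m unfolding \<rho>_def by simp
  then have \<rho>: "\<rho> \<ge> 2" using \<open>\<not> fst m \<le> 1\<close> by simp
  have "j0 = 0" using hess2_eq_0_top_row[OF pK2 HK2 _ bound2, of j0] j0 \<rho> supp by simp
  then have top2: "(0, \<rho>) \<in> supp2 K2" and corner: "(\<rho>, 0) \<in> supp2 K" using j0 supp by auto
  have "r \<le> \<rho>" using hess2_eq_0_total_degree_le[OF pK2 HK2 \<rho> bound2 top2, of "(r, 0)"] top supp by simp
  moreover have "\<rho> \<le> r" using deg[OF corner] by simp
  ultimately show False using no_edge[of "(\<rho>, 0)"] corner r by simp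
qed

text \<open>The shear \<open>y \<mapsto> y + l x\<close> with the right \<open>l\<close> kills the monomial \<open>x y^(r-1)\<close>, after which the degree
  in \<open>x\<close> is at most 1.\<close>
lemma hess2_eq_0_ridge_if_top:
  assumes pK: "poly2 K" and HK: "\<And>\<mu>. hess2 K \<mu> = 0" and r: "r \<ge> 2"
    and bound: "\<And>m. m \<in> supp2 K \<Longrightarrow> snd m \<le> r" and top: "(0, r) \<in> supp2 K"
  shows "ridge (eval2 K)"
proof -
  note deg = hess2_eq_0_total_degree_le[OF pK HK r bound top]
  define l where "l = - K (1, r - 1) / (real r * K (0, r))"
  define K' where "K' = shear2 l K"
  have pK': "poly2 K'" unfolding K'_def by (rule poly2_shear2[OF pK])
  have eval_K': "eval2 K' x y = eval2 K (1*x + 0*y) (l*x + 1*y)" for x y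
    by (simp add: K'_def eval2_shear2[OF pK])
  have HK': "\<And>\<mu>. hess2 K' \<mu> = 0" by (rule hess2_linear_subst_eq_0[OF pK pK' HK eval_K'])
  have deg': "\<And>m. m \<in> supp2 K' \<Longrightarrow> fst m + snd m \<le> r"
    using shear2_coeffs(1)[OF deg] r by (fastforce simp: K'_def supp2_def not_le[symmetric])
  have top': "(0, r) \<in> supp2 K'"
    using shear2_coeffs(2)[OF deg] top r by (simp add: K'_def supp2_def)
  have "K' (1, r - 1) = 0"
    using shear2_coeffs(3)[OF deg] top r by (simp add: K'_def l_def supp2_def field_simps)
  then have "\<And>m. m \<in> supp2 K' \<Longrightarrow> fst m \<le> 1"
    using hess2_eq_0_x_degree_le_1[OF pK' HK' r deg' top'] by blast
  moreover have "\<And>\<mu>. hess2 (swap2 K') \<mu> = 0"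
    using hess2_linear_subst_eq_0[OF pK' poly2_swap2[OF pK'] HK', of 0 1 1 0] by (simp add: eval2_swap2)
  ultimately have "ridge (eval2 (swap2 K'))"
    using ridge_if_y_degree_le_1[OF poly2_swap2[OF pK']] by (force simp: supp2_swap2)
  then have "ridge (\<lambda>x y. eval2 (swap2 K') (0*x + 1*y) (1*x + 0*y))" by (rule ridge_linear_subst) simp
  then have "ridge (eval2 K')" by (simp add: eval2_swap2)
  then have "ridge (\<lambda>x y. eval2 K' (1*x + 0*y) ((-l)*x + 1*y))" by (rule ridge_linear_subst) simp
  then show ?thesis by (simp add: eval_K')
qed

theorem hess2_eq_0_ridge:
  assumes pK: "poly2 K" and HK: "\<And>\<mu>. hess2 K \<mu> = 0"
  shows "ridge (eval2 K)"
proof (cases "\<forall>m\<in>supp2 K. snd m \<le> 1")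
  case True
  then show ?thesis using ridge_if_y_degree_le_1[OF pK HK] by blast
next
  case False
  have fin: "finite (supp2 K)" using pK by (simp add: poly2_def)
  define r where "r = Max (snd ` supp2 K)"
  have bound: "\<And>m. m \<in> supp2 K \<Longrightarrow> snd m \<le> r" using fin by (simp add: r_def)
  with False have r: "r \<ge> 2" by force
  have "r \<in> snd ` supp2 K" using fin False unfolding r_def by (intro Max_in) auto
  then obtain i where "(i, r) \<in> supp2 K" by force
  moreover have "i = 0" using hess2_eq_0_top_row[OF pK HK _ bound] calculation r by simp
  ultimately show ?thesis using hess2_eq_0_ridge_if_top[OF pK HK r bound] by simp
qed

section \<open>The shear normal form\<close>

lemma sum_power_deriv_shift:
  "(\<Sum>k\<le>N. A k * (real k * z ^ (k - 1))) = (\<Sum>k<N. A (Suc k) * real (Suc k) * z ^ k)"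
proof -
  have "(\<Sum>k\<le>N. A k * (real k * z ^ (k - 1))) = (\<Sum>k<Suc N. A k * (real k * z ^ (k - 1)))"
    by (simp add: lessThan_Suc_atMost)
  also have "\<dots> = (\<Sum>k<N. A (Suc k) * (real (Suc k) * z ^ k))"
    by (subst sum.lessThan_Suc_shift) simp
  finally show ?thesis by (simp add: mult.assoc)
qed

lemma eval2_partials_ridge:
  assumes pK: "poly2 K"
    and K: "\<And>x y. eval2 K x y = (\<Sum>k\<le>N. A k * (\<alpha> * x + \<beta> * y) ^ k) + e1 * x + e2 * y"
  defines "g \<equiv> \<lambda>z. \<Sum>k<N. A (Suc k) * real (Suc k) * z ^ k"
  shows "eval2 (dx2 K) x y = \<alpha> * g (\<alpha> * x + \<beta> * y) + e1"
    and "eval2 (dy2 K) x y = \<beta> * g (\<alpha> * x + \<beta> * y) + e2"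
proof -
  have "((\<lambda>x. eval2 K x y) has_real_derivative \<alpha> * g (\<alpha> * x + \<beta> * y) + e1) (at x)"
    unfolding K g_def sum_power_deriv_shift[symmetric]
    by (auto intro!: derivative_eq_intros sum.cong simp: sum_distrib_left algebra_simps)
  then show "eval2 (dx2 K) x y = \<alpha> * g (\<alpha> * x + \<beta> * y) + e1"
    using has_real_derivative_eval2_x[OF pK, of y x] DERIV_unique by blast
  have "((\<lambda>y. eval2 K x y) has_real_derivative \<beta> * g (\<alpha> * x + \<beta> * y) + e2) (at y)"
    unfolding K g_def sum_power_deriv_shift[symmetric]
    by (auto intro!: derivative_eq_intros sum.cong simp: sum_distrib_left algebra_simps)
  then show "eval2 (dy2 K) x y = \<beta> * g (\<alpha> * x + \<beta> * y) + e2"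
    using has_real_derivative_eval2_y[OF pK, of x y] DERIV_unique by blast
qed

text \<open>Since \<open>K_x = c p - a q\<close> and \<open>K_y = d p - b q\<close> for the potential \<open>K\<close>, both \<open>p\<close> and \<open>q\<close> are
  affine combinations of \<open>K_x\<close> and \<open>K_y\<close>.\<close>
lemma jacobian_pair_common_profile:
  assumes pp: "poly2 p" and pq: "poly2 q" and \<Delta>: "a * d - b * c \<noteq> 0"
    and L: "\<And>\<mu>. jac_lin2 a b c d p q \<mu> = 0" and J: "\<And>\<mu>. jac2 p q \<mu> = 0"
  obtains \<alpha> \<beta> \<gamma>p B n \<kappa>p \<gamma>q \<kappa>q where "(\<alpha>, \<beta>) \<noteq> (0, 0)"
    and "\<And>x y. eval2 p x y = \<gamma>p * (\<Sum>k<n. B k * (\<alpha> * x + \<beta> * y) ^ k) + \<kappa>p"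
    and "\<And>x y. eval2 q x y = \<gamma>q * (\<Sum>k<n. B k * (\<alpha> * x + \<beta> * y) ^ k) + \<kappa>q"
proof -
  define K where "K = potential2 a b c d p q"
  have pK: "poly2 K" unfolding K_def by (rule poly2_potential2[OF pp pq])
  have "ridge (eval2 K)"
    unfolding K_def by (rule hess2_eq_0_ridge[OF poly2_potential2[OF pp pq] hess2_potential2_eq_0[OF pp pq L J]])
  then obtain \<alpha> \<beta> A N e1 e2 where ab: "(\<alpha>, \<beta>) \<noteq> (0, 0)"
    and K: "\<And>x y. eval2 K x y = (\<Sum>k\<le>N. A k * (\<alpha> * x + \<beta> * y) ^ k) + e1 * x + e2 * y"
    unfolding ridge_def by blast
  define g where "g = (\<lambda>z. \<Sum>k<N. A (Suc k) * real (Suc k) * z ^ k)"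
  define \<Delta>' where "\<Delta>' = a * d - b * c"
  have "eval2 p x y = ((a * \<beta> - b * \<alpha>) / \<Delta>') * g (\<alpha> * x + \<beta> * y) + (a * e2 - b * e1) / \<Delta>'"
    and "eval2 q x y = ((c * \<beta> - d * \<alpha>) / \<Delta>') * g (\<alpha> * x + \<beta> * y) + (c * e2 - d * e1) / \<Delta>'" for x y
  proof -
    have Kx: "c * eval2 p x y - a * eval2 q x y = \<alpha> * g (\<alpha> * x + \<beta> * y) + e1"
      and Ky: "d * eval2 p x y - b * eval2 q x y = \<beta> * g (\<alpha> * x + \<beta> * y) + e2"
      using eval2_partials_ridge[OF pK K, of x y] pp pq
      by (simp_all add: K_def g_def dx2_potential2[OF L] dy2_potential2 eval2_lin2)
    have "\<Delta>' * eval2 p x y = a * (d * eval2 p x y - b * eval2 q x y) - b * (c * eval2 p x y - a * eval2 q x y)"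
      "\<Delta>' * eval2 q x y = c * (d * eval2 p x y - b * eval2 q x y) - d * (c * eval2 p x y - a * eval2 q x y)"
      by (simp_all add: \<Delta>'_def algebra_simps)
    then have "\<Delta>' * eval2 p x y = (a * \<beta> - b * \<alpha>) * g (\<alpha> * x + \<beta> * y) + (a * e2 - b * e1)"
      "\<Delta>' * eval2 q x y = (c * \<beta> - d * \<alpha>) * g (\<alpha> * x + \<beta> * y) + (c * e2 - d * e1)"
      unfolding Kx Ky by (simp_all add: algebra_simps)
    then show "eval2 p x y = ((a * \<beta> - b * \<alpha>) / \<Delta>') * g (\<alpha> * x + \<beta> * y) + (a * e2 - b * e1) / \<Delta>'"
      and "eval2 q x y = ((c * \<beta> - d * \<alpha>) / \<Delta>') * g (\<alpha> * x + \<beta> * y) + (c * e2 - d * e1) / \<Delta>'"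
      using \<Delta> unfolding \<Delta>'_def[symmetric]
      by (metis (no_types, lifting) add_divide_distrib nonzero_mult_div_cancel_left times_divide_eq_left)+
  qed
  then show ?thesis
    using that[OF ab, where B = "\<lambda>k. A (Suc k) * real (Suc k)" and n = N
        and \<gamma>p = "(a * \<beta> - b * \<alpha>) / \<Delta>'" and \<kappa>p = "(a * e2 - b * e1) / \<Delta>'"
        and \<gamma>q = "(c * \<beta> - d * \<alpha>) / \<Delta>'" and \<kappa>q = "(c * e2 - d * e1) / \<Delta>'"]
    unfolding g_def by blast
qed

lemma linear2_solve:
  fixes a b c d :: real
  assumes "a * d - b * c \<noteq> 0"
  shows "a * ((d*u - b*v) / (a*d - b*c)) + b * ((a*v - c*u) / (a*d - b*c)) = u"
    and "c * ((d*u - b*v) / (a*d - b*c)) + d * ((a*v - c*u) / (a*d - b*c)) = v"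
proof -
  define D where "D = a*d - b*c"
  have "D \<noteq> 0" using assms by (simp add: D_def)
  then have "a * ((d*u - b*v) / D) + b * ((a*v - c*u) / D) = u"
    and "c * ((d*u - b*v) / D) + d * ((a*v - c*u) / D) = v"
    by (simp_all add: field_simps) (simp_all add: D_def algebra_simps)
  then show "a * ((d*u - b*v) / (a*d - b*c)) + b * ((a*v - c*u) / (a*d - b*c)) = u"
    and "c * ((d*u - b*v) / (a*d - b*c)) + d * ((a*v - c*u) / (a*d - b*c)) = v"
    by (simp_all only: D_def)
qed

lemma inv_linear2:
  fixes a b c d :: real
  assumes "a * d - b * c \<noteq> 0"
  shows "inv (\<lambda>(x,y). (a*x + b*y, c*x + d*y))
       = (\<lambda>(u,v). ((d*u - b*v) / (a*d - b*c), (a*v - c*u) / (a*d - b*c)))"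
proof (rule inv_equality)
  fix z :: "real \<times> real"
  obtain x y where z: "z = (x, y)" by (cases z)
  have "d * (a*x + b*y) - b * (c*x + d*y) = (a*d - b*c) * x"
    "a * (c*x + d*y) - c * (a*x + b*y) = (a*d - b*c) * y" by (simp_all add: algebra_simps)
  then show "(\<lambda>(u,v). ((d*u - b*v) / (a*d - b*c), (a*v - c*u) / (a*d - b*c))) ((\<lambda>(x,y). (a*x + b*y, c*x + d*y)) z) = z"
    using assms by (simp add: z)
next
  fix z :: "real \<times> real"
  show "(\<lambda>(x,y). (a*x + b*y, c*x + d*y)) ((\<lambda>(u,v). ((d*u - b*v) / (a*d - b*c), (a*v - c*u) / (a*d - b*c))) z) = z"
    using linear2_solve[OF assms] by (cases z) simp
qed

lemma shear_mapI_profile: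
  assumes "(\<alpha>, \<beta>) \<noteq> (0, 0)"
    and F: "\<And>u v. F (u, v) = (u + \<gamma>1 * (\<Sum>k<n. B k * (\<alpha> * u + \<beta> * v) ^ k) + \<kappa>1,
                               v + \<gamma>2 * (\<Sum>k<n. B k * (\<alpha> * u + \<beta> * v) ^ k) + \<kappa>2)"
  shows "shear_map F"
proof -
  define B' where "B' k = (if k < n then B k else 0)" for k
  have split: "(\<Sum>k<n. B k * z ^ k) = B' 0 + B' 1 * z + (\<Sum>k=2..Suc n. B' k * z ^ k)" for z :: real
  proof -
    have "(\<Sum>k\<le>Suc n. B' k * z ^ k) = (\<Sum>k<n. B' k * z ^ k)"
      by (rule sum.mono_neutral_right) (auto simp: B'_def)
    moreover have "{..Suc n} = insert 0 (insert 1 {2..Suc n})" by auto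
    ultimately show ?thesis by (simp add: B'_def)
  qed
  show ?thesis
    unfolding shear_map_def
  proof (intro exI conjI allI)
    show "(\<alpha>, \<beta>) \<noteq> (0, 0)" by (fact assms(1))
    fix u v
    show "F (u, v) =
      ((\<gamma>1 * B' 0 + \<kappa>1) + (1 + \<gamma>1 * B' 1 * \<alpha>) * u + (\<gamma>1 * B' 1 * \<beta>) * v
          + (\<Sum>i=2..Suc n. (\<lambda>i. \<gamma>1 * B' i) i * (\<alpha> * u + \<beta> * v) ^ i),
       (\<gamma>2 * B' 0 + \<kappa>2) + (\<gamma>2 * B' 1 * \<alpha>) * u + (1 + \<gamma>2 * B' 1 * \<beta>) * v
          + (\<Sum>i=2..Suc n. (\<lambda>i. \<gamma>2 * B' i) i * (\<alpha> * u + \<beta> * v) ^ i))"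
      unfolding F split by (simp add: algebra_simps sum_distrib_left)
  qed
qed

lemma shear_map_Phi_comp_inv_jac0:
  assumes "poly2 p" "poly2 q" "ord2 p > 1" "ord2 q > 1" and \<Delta>: "a * d - b * c \<noteq> 0"
    and ab: "(\<alpha>, \<beta>) \<noteq> (0, 0)"
    and p: "\<And>x y. eval2 p x y = \<gamma>1 * (\<Sum>k<n. B k * (\<alpha> * x + \<beta> * y) ^ k) + \<kappa>1"
    and q: "\<And>x y. eval2 q x y = \<gamma>2 * (\<Sum>k<n. B k * (\<alpha> * x + \<beta> * y) ^ k) + \<kappa>2"
  shows "shear_map (Phi a b c d p q \<circ> inv (jac0 a b c d p q))"
proof (rule shear_mapI_profile)
  define \<Delta>' where "\<Delta>' = a * d - b * c"
  show "((\<alpha> * d - \<beta> * c) / \<Delta>', (\<beta> * a - \<alpha> * b) / \<Delta>') \<noteq> (0, 0)"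
  proof
    assume "((\<alpha> * d - \<beta> * c) / \<Delta>', (\<beta> * a - \<alpha> * b) / \<Delta>') = (0, 0)"
    then have 0: "\<alpha> * d - \<beta> * c = 0" "\<beta> * a - \<alpha> * b = 0" using \<Delta> by (auto simp: \<Delta>'_def)
    have "\<alpha> * \<Delta>' = a * (\<alpha> * d - \<beta> * c) + c * (\<beta> * a - \<alpha> * b)"
      "\<beta> * \<Delta>' = b * (\<alpha> * d - \<beta> * c) + d * (\<beta> * a - \<alpha> * b)"
      by (simp_all add: \<Delta>'_def algebra_simps)
    then show False using 0 ab \<Delta> by (simp add: \<Delta>'_def)
  qed
  fix u v
  define x where "x = (d*u - b*v) / \<Delta>'"
  define y where "y = (a*v - c*u) / \<Delta>'"
  have "a * x + b * y = u" "c * x + d * y = v"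
    using linear2_solve[OF \<Delta>] by (simp_all add: x_def y_def \<Delta>'_def)
  moreover have "\<alpha> * x + \<beta> * y = (\<alpha> * d - \<beta> * c) / \<Delta>' * u + (\<beta> * a - \<alpha> * b) / \<Delta>' * v"
    using \<Delta> by (simp add: x_def y_def \<Delta>'_def field_simps)
  moreover have "inv (jac0 a b c d p q) (u, v) = (x, y)"
    unfolding jac0_eq_linear_part[OF assms(1-4)] inv_linear2[OF \<Delta>] by (simp add: x_def y_def \<Delta>'_def)
  then have "(Phi a b c d p q \<circ> inv (jac0 a b c d p q)) (u, v)
      = (a*x + b*y + eval2 p x y, c*x + d*y + eval2 q x y)"
    by (simp add: Phi_def)
  ultimately show "(Phi a b c d p q \<circ> inv (jac0 a b c d p q)) (u, v) =
    (u + \<gamma>1 * (\<Sum>k<n. B k * ((\<alpha> * d - \<beta> * c) / \<Delta>' * u + (\<beta> * a - \<alpha> * b) / \<Delta>' * v) ^ k) + \<kappa>1,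
     v + \<gamma>2 * (\<Sum>k<n. B k * ((\<alpha> * d - \<beta> * c) / \<Delta>' * u + (\<beta> * a - \<alpha> * b) / \<Delta>' * v) ^ k) + \<kappa>2)"
    by (simp add: p q)
qed

theorem corollary1:
  fixes a b c d :: real and p q :: poly2
  assumes "poly2 p" and "poly2 q"
    and "jacobian_map a b c d p q"
    and "ord2 p > 1" and "ord2 q > 1"
    and "enat (max (deg2 p) (deg2 q)) < ord2 p + ord2 q - 1
         \<or> (even2 p \<and> even2 q)
         \<or> (odd2 p \<and> even2 q \<and> gap_condition p q)
         \<or> sym_gap_condition p q"
  shows "shear_map (Phi a b c d p q \<circ> inv (jac0 a b c d p q))"
proof -
  note \<Delta> = jacobian_map_det_linear_part[OF assms(1-5)]
  have sep: "degree_separated p q"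
    using assms(6)
  proof (elim disjE conjE)
    show "enat (max (deg2 p) (deg2 q)) < ord2 p + ord2 q - 1 \<Longrightarrow> degree_separated p q"
      by (rule degree_separated_if_degree_bound[OF assms(1,2)])
    show "even2 p \<Longrightarrow> even2 q \<Longrightarrow> degree_separated p q"
      by (rule degree_separated_if_even)
    show "odd2 p \<Longrightarrow> even2 q \<Longrightarrow> gap_condition p q \<Longrightarrow> degree_separated p q"
      by (rule degree_separated_if_odd_even_gap[OF assms(1,4)])
    show "sym_gap_condition p q \<Longrightarrow> degree_separated p q"
      by (rule degree_separated_if_sym_gap[OF assms(1,2,4,5)])
  qed
  have L: "jac_lin2 a b c d p q \<mu> = 0" for \<mu> by (rule degree_separated_coeffs_eq_0(1)[OF sep \<Delta>(2)])
  have J: "jac2 p q \<mu> = 0" for \<mu> by (rule degree_separated_coeffs_eq_0(2)[OF sep \<Delta>(2)])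
  obtain \<alpha> \<beta> \<gamma>p B n \<kappa>p \<gamma>q \<kappa>q where "(\<alpha>, \<beta>) \<noteq> (0, 0)"
    and "\<And>x y. eval2 p x y = \<gamma>p * (\<Sum>k<n. B k * (\<alpha> * x + \<beta> * y) ^ k) + \<kappa>p"
    and "\<And>x y. eval2 q x y = \<gamma>q * (\<Sum>k<n. B k * (\<alpha> * x + \<beta> * y) ^ k) + \<kappa>q"
    using jacobian_pair_common_profile[OF assms(1,2) \<Delta>(1) L J] by blast
  then show ?thesis by (rule shear_map_Phi_comp_inv_jac0[OF assms(1,2,4,5) \<Delta>(1)])
qed

end
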